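(* Let $G=(V,E,p,(V_{E},V_{O}))$ be a parity game and let $\bar\rho$ be the least game parity progress measure of $G$ (least with respect to the pointwise order on functions $V\to\mathbb{M}$). Then for every $v\in V$: (1) there is a strategy $\sigma_{O}$ of player Odd (not necessarily positional) such that every play $\pi$ starting in $v$ and consistent with $\sigma_{O}$ satisfies $\theta(\pi)\ge\bar\rho(v)$; (2) there is a positional strategy $\sigma_{E}$ of player Even such that every play $\pi$ starting in $v$ and consistent with $\sigma_{E}$ satisfies $\theta(\pi)\le\bar\rho(v)$.
   Context: A parity game $G=(V,E,p,(V_{E},V_{O}))$ consists of a finite set $V$ of vertices partitioned into $V_{E}$ (owned by player Even) and $V_{O}$ (owned by player Odd), a total edge relation $E\subseteq V\times V$, and a priority function $p:V\to\mathbb{N}$. Write $\mathrm{post}(v)=\{w:(v,w)\in E\}$ and $V_i=\{v:p(v)=i\}$. A play is an infinite path; Even wins it iff the least priority occurring infinitely often is even, otherwise Odd wins. A strategy of player $X$ is a partial function $\sigma:V^+\to V$ defined only on finite paths ending in a vertex $u_n$ owned by $X$, with value in $\mathrm{post}(u_n)$; positional if its value depends only on the last vertex. A play is consistent with $\sigma$ if $u_{n+1}=\sigma(u_1\cdots u_n)$ whenever defined. Let $d$ be one more than the largest priority. $\mathbb{M}$ consists of $\top$ and all tuples $(m_0,\dots,m_{d-1})\in\mathbb{N}^d$ with $m_i=0$ for even $i$ and $m_i\le|V_i|$ for odd $i$; $\mathbb{M}_{ext}$ consists of $\top$ and all tuples in $\mathbb{N}^d$ that are $0$ at even positions. Tuples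 are ordered lexicographically, $\top$ above all tuples. $m<_i m'$ means $(m_0,\dots,m_i)<(m'_0,\dots,m'_i)$ lexicographically (tuples $<_i\top$, $\top=_i\top$), $m=_i m'$ means agreement on positions $0..i$. For $\rho:V\to\mathbb{M}$ and $w\in\mathrm{post}(v)$, $\mathrm{Prog}(\rho,v,w)$ is the least $m\in\mathbb{M}$ with $m\ge_{p(v)}\rho(w)$ if $p(v)$ is even, and with $m>_{p(v)}\rho(w)$ or $m=\rho(w)=\top$ if $p(v)$ is odd. $\rho$ is a game parity progress measure if each $v\in V_{E}$ has some $w\in\mathrm{post}(v)$ with $\rho(v)\ge_{p(v)}\mathrm{Prog}(\rho,v,w)$, and each $v\in V_{O}$ satisfies this for all $w\in\mathrm{post}(v)$. Play value: for a priority $k$, a $k$-dominated stretch is a finite contiguous part of a play whose minimal priority is $k$; its degree is its number of vertices of priority $k$. $\theta(\pi)\in\mathbb{M}_{ext}$ is $\top$ if Odd wins $\pi$; otherwise it is the tuple with $0$ at even positions and, at each odd position $i$, the degree of the maximal $i$-dominated stretch that is a prefix of $\pi$ ($0$ if none). *)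

theory Defs
  imports Main
begin

text \<open>A parity game is given by a finite vertex set V, an edge relation E on V
 that is total (every vertex has a successor), a priority function p, and the set
 VE of vertices owned by Even; the vertices owned by Odd are V - VE.\<close>

definition parity_game :: "'v set \<Rightarrow> ('v \<times> 'v) set \<Rightarrow> ('v \<Rightarrow> nat) \<Rightarrow> 'v set \<Rightarrow> bool" where
  "parity_game V E p VE \<longleftrightarrow> finite V \<and> E \<subseteq> V \<times> V \<and> (\<forall>v\<in>V. \<exists>w. (v, w) \<in> E) \<and> VE \<subseteq> V"

definition post :: "('v \<times> 'v) set \<Rightarrow> 'v \<Rightarrow> 'v set" where
  "post E v = {w. (v, w) \<in> E}"

definition dim :: "'v set \<Rightarrow> ('v \<Rightarrow> nat) \<Rightarrow> nat" where
  "dim V p = Suc (Max (p ` V))"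

text \<open>None represents top; Some xs represents the tuple xs (of length d).\<close>
type_synonym meas = "nat list option"

definition lex_lt :: "nat list \<Rightarrow> nat list \<Rightarrow> bool" where
  "lex_lt xs ys \<longleftrightarrow> (\<exists>k. k < length xs \<and> k < length ys \<and> take k xs = take k ys \<and> xs ! k < ys ! k)"

definition meas_le :: "meas \<Rightarrow> meas \<Rightarrow> bool" where
  "meas_le m m' = (case m' of None \<Rightarrow> True
      | Some ys \<Rightarrow> (case m of None \<Rightarrow> False | Some xs \<Rightarrow> xs = ys \<or> lex_lt xs ys))"

definition meas_lt_i :: "nat \<Rightarrow> meas \<Rightarrow> meas \<Rightarrow> bool" where
  "meas_lt_i i m m' = (case (m, m') of
       (Some xs, Some ys) \<Rightarrow> lex_lt (take (Suc i) xs) (take (Suc i) ys)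
     | (Some _, None) \<Rightarrow> True
     | _ \<Rightarrow> False)"

definition meas_eq_i :: "nat \<Rightarrow> meas \<Rightarrow> meas \<Rightarrow> bool" where
  "meas_eq_i i m m' = (case (m, m') of
       (Some xs, Some ys) \<Rightarrow> take (Suc i) xs = take (Suc i) ys
     | (None, None) \<Rightarrow> True
     | _ \<Rightarrow> False)"

definition meas_le_i :: "nat \<Rightarrow> meas \<Rightarrow> meas \<Rightarrow> bool" where
  "meas_le_i i m m' \<longleftrightarrow> meas_lt_i i m m' \<or> meas_eq_i i m m'"

definition MM :: "'v set \<Rightarrow> ('v \<Rightarrow> nat) \<Rightarrow> meas set" where
  "MM V p = {None} \<union> Some ` {xs. length xs = dim V p \<and>
      (\<forall>i < dim V p. (even i \<longrightarrow> xs ! i = 0) \<and> (odd i \<longrightarrow> xs ! i \<le> card {v \<in> V. p v = i}))}"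

definition MM_ext :: "'v set \<Rightarrow> ('v \<Rightarrow> nat) \<Rightarrow> meas set" where
  "MM_ext V p = {None} \<union> Some ` {xs. length xs = dim V p \<and> (\<forall>i < dim V p. even i \<longrightarrow> xs ! i = 0)}"

definition prog_cond :: "('v \<Rightarrow> nat) \<Rightarrow> ('v \<Rightarrow> meas) \<Rightarrow> 'v \<Rightarrow> 'v \<Rightarrow> meas \<Rightarrow> bool" where
  "prog_cond p \<rho> v w m = (if even (p v) then meas_le_i (p v) (\<rho> w) m
                         else (meas_lt_i (p v) (\<rho> w) m \<or> (m = None \<and> \<rho> w = None)))"

definition Prog :: "'v set \<Rightarrow> ('v \<Rightarrow> nat) \<Rightarrow> ('v \<Rightarrow> meas) \<Rightarrow> 'v \<Rightarrow> 'v \<Rightarrow> meas" where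
  "Prog V p \<rho> v w = (THE m. m \<in> MM V p \<and> prog_cond p \<rho> v w m \<and>
       (\<forall>m' \<in> MM V p. prog_cond p \<rho> v w m' \<longrightarrow> meas_le m m'))"

definition gppm :: "'v set \<Rightarrow> ('v \<times> 'v) set \<Rightarrow> ('v \<Rightarrow> nat) \<Rightarrow> 'v set \<Rightarrow> ('v \<Rightarrow> meas) \<Rightarrow> bool" where
  "gppm V E p VE \<rho> \<longleftrightarrow> (\<forall>v\<in>V. \<rho> v \<in> MM V p)
     \<and> (\<forall>v\<in>VE. \<exists>w\<in>post E v. meas_le_i (p v) (Prog V p \<rho> v w) (\<rho> v))
     \<and> (\<forall>v\<in>V - VE. \<forall>w\<in>post E v. meas_le_i (p v) (Prog V p \<rho> v w) (\<rho> v))"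

definition least_gppm :: "'v set \<Rightarrow> ('v \<times> 'v) set \<Rightarrow> ('v \<Rightarrow> nat) \<Rightarrow> 'v set \<Rightarrow> ('v \<Rightarrow> meas) \<Rightarrow> bool" where
  "least_gppm V E p VE \<rho> \<longleftrightarrow> gppm V E p VE \<rho>
     \<and> (\<forall>\<rho>'. gppm V E p VE \<rho>' \<longrightarrow> (\<forall>v\<in>V. meas_le (\<rho> v) (\<rho>' v)))"

definition play :: "'v set \<Rightarrow> ('v \<times> 'v) set \<Rightarrow> (nat \<Rightarrow> 'v) \<Rightarrow> bool" where
  "play V E \<pi> \<longleftrightarrow> (\<forall>i. \<pi> i \<in> V \<and> (\<pi> i, \<pi> (Suc i)) \<in> E)"

definition even_wins :: "('v \<Rightarrow> nat) \<Rightarrow> (nat \<Rightarrow> 'v) \<Rightarrow> bool" where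
  "even_wins p \<pi> \<longleftrightarrow> even (Min {k. \<exists>\<^sub>\<infinity> i. p (\<pi> i) = k})"

definition strategy :: "'v set \<Rightarrow> ('v \<times> 'v) set \<Rightarrow> 'v set \<Rightarrow> ('v list \<Rightarrow> 'v) \<Rightarrow> bool" where
  "strategy V E VX \<sigma> \<longleftrightarrow>
     (\<forall>xs. xs \<noteq> [] \<and> set xs \<subseteq> V \<and> last xs \<in> VX \<longrightarrow> \<sigma> xs \<in> post E (last xs))"

definition positional :: "'v set \<Rightarrow> 'v set \<Rightarrow> ('v list \<Rightarrow> 'v) \<Rightarrow> bool" where
  "positional V VX \<sigma> \<longleftrightarrow> (\<forall>xs ys. xs \<noteq> [] \<and> ys \<noteq> [] \<and> set xs \<subseteq> V \<and> set ys \<subseteq> V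
      \<and> last xs \<in> VX \<and> last xs = last ys \<longrightarrow> \<sigma> xs = \<sigma> ys)"

definition consistent :: "'v set \<Rightarrow> ('v list \<Rightarrow> 'v) \<Rightarrow> (nat \<Rightarrow> 'v) \<Rightarrow> bool" where
  "consistent VX \<sigma> \<pi> \<longleftrightarrow> (\<forall>n. \<pi> n \<in> VX \<longrightarrow> \<pi> (Suc n) = \<sigma> (map \<pi> [0..<Suc n]))"

text \<open>Degree of the maximal i-dominated stretch that is a prefix of the play:
 the supremum of the number of priority-i vertices over all nonempty prefixes whose
 minimal priority is i (0 if there is none).\<close>
definition degree :: "('v \<Rightarrow> nat) \<Rightarrow> (nat \<Rightarrow> 'v) \<Rightarrow> nat \<Rightarrow> nat" where
  "degree p \<pi> i = Sup {card {j. j < n \<and> p (\<pi> j) = i} | n. 0 < n \<and> Min (p ` \<pi> ` {..<n}) = i}"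

definition theta :: "'v set \<Rightarrow> ('v \<Rightarrow> nat) \<Rightarrow> (nat \<Rightarrow> 'v) \<Rightarrow> meas" where
  "theta V p \<pi> = (if even_wins p \<pi>
       then Some (map (\<lambda>i. if even i then 0 else degree p \<pi> i) [0..<dim V p])
       else None)"

end

theory Submission
  imports Defs "HOL-Library.Infinite_Set"
begin

text \<open>
  Even: a progress measure \<rho> lets Even pick, at each of her vertices, a successor satisfying the
  progress inequality. Along a play consistent with this positional choice the truncated tuples
  \<rho>(\<pi> n) decrease lexicographically, strictly at the least priority k seen infinitely often; if k
  were odd this would be an infinite descent, so Even wins, and the play value is then bounded by
  \<rho> backwards from a position after which k is the least priority.

  Odd: let g v be the largest element of MM that Odd can force from v. Composing strategies shows
  that g is itself a progress measure, hence lies above the least one. The subtle point is that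
  progress may leave MM: if Odd forces a value whose entry at odd q exceeds the number of
  priority-q vertices, he can force a value that is larger already before position q. To see this,
  he plays the old strategy on the history with all cycles through priority-q vertices inside the
  q-dominated prefix cut out; the actual play then follows an old play in which these vertices are
  distinct, so its q-th entry is too small and the difference shows up earlier.
\<close>

lemma lex_lt_nth:
  assumes "length xs = n" "length ys = n"
  shows "lex_lt xs ys \<longleftrightarrow> (\<exists>k<n. (\<forall>j<k. xs!j = ys!j) \<and> xs!k < ys!k)"
proof -
  have t: "take k xs = take k ys \<longleftrightarrow> (\<forall>j<k. xs!j = ys!j)" if "k < n" for k
    using that assms by (auto simp: list_eq_iff_nth_eq)
  show ?thesis unfolding lex_lt_def using t assms by auto
qed

lemma lex_lt_lexord:
  "length xs = length ys \<Longrightarrow> lex_lt xs ys \<longleftrightarrow> (xs, ys) \<in> lexord {(a,b). a < (b::nat)}"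
  unfolding lex_lt_def lexord_take_index_conv by auto

lemma lex_lt_iff_lex:
  "length xs = length ys \<Longrightarrow> lex_lt xs ys \<longleftrightarrow> (xs, ys) \<in> lex less_than"
  unfolding lex_lt_def lexord_lex lexord_take_index_conv by auto

lemma lex_lt_irrefl: "\<not> lex_lt xs xs"
  unfolding lex_lt_def by auto

lemma lex_lt_trans:
  assumes "length xs = length ys" "length ys = length zs" "lex_lt xs ys" "lex_lt ys zs"
  shows "lex_lt xs zs"
proof -
  have "trans {(a,b). a < (b::nat)}" by (auto simp: trans_def)
  then show ?thesis using assms lexord_trans[of xs ys "{(a,b). a < (b::nat)}" zs]
    by (simp add: lex_lt_lexord)
qed

lemma lex_lt_total:
  assumes "length xs = length ys" "xs \<noteq> ys"
  shows "lex_lt xs ys \<or> lex_lt ys xs"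
proof -
  have "(xs,ys) \<in> lexord {(a,b). a < (b::nat)} \<or> xs = ys \<or> (ys,xs) \<in> lexord {(a,b). a < (b::nat)}"
    by (rule lexord_linear) auto
  then show ?thesis using assms lex_lt_lexord[of xs ys] lex_lt_lexord[of ys xs] by auto
qed

lemma lex_lt_asym:
  assumes "length xs = length ys" "lex_lt xs ys" shows "\<not> lex_lt ys xs"
  by (metis assms lex_lt_trans lex_lt_irrefl)

definition meas_len :: "nat \<Rightarrow> meas \<Rightarrow> bool" where
  "meas_len n m \<longleftrightarrow> (case m of None \<Rightarrow> True | Some xs \<Rightarrow> length xs = n)"

lemma meas_len_simps[simp]: "meas_len n None" "meas_len n (Some xs) \<longleftrightarrow> length xs = n"
  by (auto simp: meas_len_def)

lemma meas_le_simps[simp]: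
  "meas_le m None"
  "meas_le None (Some ys) \<longleftrightarrow> False"
  "meas_le (Some xs) (Some ys) \<longleftrightarrow> xs = ys \<or> lex_lt xs ys"
  by (auto simp: meas_le_def split: option.splits)

lemma meas_le_refl[simp]: "meas_le m m"
  by (cases m) auto

lemma meas_le_trans:
  assumes "meas_len n a" "meas_len n b" "meas_len n c" "meas_le a b" "meas_le b c"
  shows "meas_le a c"
proof (cases a)
  case (Some xs)
  show ?thesis
  proof (cases c)
    case (Some zs)
    with \<open>a = Some xs\<close> assms obtain ys where b: "b = Some ys" by (cases b) auto
    show ?thesis using assms Some \<open>a = Some xs\<close> b lex_lt_trans[of xs ys zs] by auto
  qed simp
next
  case None
  then show ?thesis using assms by (cases b; cases c) auto
qed

lemma meas_le_total:
  assumes "meas_len n a" "meas_len n b"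
  shows "meas_le a b \<or> meas_le b a"
  using assms lex_lt_total
  by (cases a; cases b) auto

lemma meas_le_antisym:
  assumes "meas_len n a" "meas_len n b" "meas_le a b" "meas_le b a"
  shows "a = b"
proof (cases a)
  case (Some xs)
  then obtain ys where b: "b = Some ys" using assms by (cases b) auto
  show ?thesis using assms Some b lex_lt_asym[of xs ys] by auto
next
  case None
  then show ?thesis using assms by (cases b) auto
qed

lemma lex_le_of_prefix_eq_zero_tail:
  assumes "length xs = n" "length ys = n" "\<forall>j<m. xs!j = ys!j" "\<forall>j. m \<le> j \<longrightarrow> j < n \<longrightarrow> xs!j = 0"
  shows "xs = ys \<or> lex_lt xs ys"
proof (cases "xs = ys")
  case False
  then have "\<exists>j<n. xs!j \<noteq> ys!j" using assms by (auto simp: list_eq_iff_nth_eq)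
  define k where "k = (LEAST j. j < n \<and> xs!j \<noteq> ys!j)"
  have k: "k < n \<and> xs!k \<noteq> ys!k" unfolding k_def
    by (rule LeastI_ex) (use \<open>\<exists>j<n. xs!j \<noteq> ys!j\<close> in auto)
  have below: "\<forall>j<k. xs!j = ys!j"
    using not_less_Least k unfolding k_def by (metis (mono_tags, lifting) order.strict_trans)
  have "m \<le> k" using assms(3) k by (metis not_le)
  then have "xs!k < ys!k" using assms(4) k by auto
  then show ?thesis using lex_lt_nth[OF assms(1,2)] k below by blast
qed simp

lemma finite_total_has_least:
  assumes "finite S" "S \<noteq> {}"
    "\<forall>a\<in>S. \<forall>b\<in>S. R a b \<or> R b a"
    "\<forall>a\<in>S. \<forall>b\<in>S. \<forall>c\<in>S. R a b \<longrightarrow> R b c \<longrightarrow> R a c"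
  shows "\<exists>m\<in>S. \<forall>x\<in>S. R m x"
  using assms
proof (induction S rule: finite_ne_induct)
  case (singleton x) then show ?case by blast
next
  case (insert x F)
  have t1: "\<forall>a\<in>F. \<forall>b\<in>F. R a b \<or> R b a" using insert.prems(1) by blast
  have t2: "\<forall>a\<in>F. \<forall>b\<in>F. \<forall>c\<in>F. R a b \<longrightarrow> R b c \<longrightarrow> R a c" using insert.prems(2) by blast
  obtain m where m: "m \<in> F" "\<forall>y\<in>F. R m y" using insert.IH[OF t1 t2] by blast
  show ?case
  proof (cases "R m x")
    case True
    show ?thesis
    proof (rule bexI[of _ m])
      show "\<forall>y\<in>insert x F. R m y" using True m by blast
      show "m \<in> insert x F" using m by blast
    qed
  next
    case False
    have xx: "R x x" using insert.prems(1) by blast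
    have xm: "R x m" using False insert.prems(1) m(1) by blast
    have "\<forall>y\<in>F. R x y"
    proof
      fix y assume "y \<in> F"
      then show "R x y" using insert.prems(2) xm m by blast
    qed
    then show ?thesis using xx by blast
  qed
qed

lemma wf_no_frequent_descent:
  assumes "wf R" "trans R"
    and weak: "\<And>n. n \<ge> N \<Longrightarrow> (f (Suc n), f n) \<in> R\<^sup>="
    and strict: "\<exists>\<^sub>\<infinity>n. (f (Suc n), f n) \<in> R"
  shows False
proof -
  obtain z where z: "z \<in> f ` {N..}" "\<And>y. (y, z) \<in> R \<Longrightarrow> y \<notin> f ` {N..}"
    using wfE_min[OF assms(1), of "f N" "f ` {N..}"] by blast
  then obtain m where m: "m \<ge> N" "\<And>n. n \<ge> N \<Longrightarrow> (f n, f m) \<notin> R"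
    by auto
  have below: "(f n, f m) \<in> R\<^sup>=" if "m \<le> n" for n
    using that
  proof (induction n rule: dec_induct)
    case (step n)
    then show ?case using weak[of n] m(1) \<open>trans R\<close> unfolding trans_def by auto
  qed simp
  obtain n where "n \<ge> m" "(f (Suc n), f n) \<in> R" using strict unfolding INFM_nat_le by blast
  then have "(f (Suc n), f m) \<in> R" using below[of n] \<open>trans R\<close> unfolding trans_def by auto
  then show False using m \<open>n \<ge> m\<close> by auto
qed

text \<open>prog_meas d q m is the least tuple (or top) satisfying the progress condition at priority q
  with respect to m, ignoring the bounds of MM; Prog is the least element of MM above it
  (lemma Prog_spec).\<close>

definition prog_list :: "nat \<Rightarrow> nat \<Rightarrow> nat list \<Rightarrow> nat list" where
  "prog_list d q xs = map (\<lambda>i. if i < q then xs!i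
     else if i = q then (if odd q then Suc (xs!q) else xs!q) else 0) [0..<d]"

definition prog_meas :: "nat \<Rightarrow> nat \<Rightarrow> meas \<Rightarrow> meas" where
  "prog_meas d q m = map_option (prog_list d q) m"

lemma prog_meas_simps[simp]:
  "prog_meas d q None = None"
  "prog_meas d q (Some xs) = Some (prog_list d q xs)"
  by (auto simp: prog_meas_def)

lemma prog_list_length[simp]: "length (prog_list d q xs) = d"
  by (simp add: prog_list_def)

lemma prog_list_nth: "i < d \<Longrightarrow> prog_list d q xs ! i =
    (if i < q then xs!i else if i = q then (if odd q then Suc (xs!q) else xs!q) else 0)"
  by (simp add: prog_list_def)

lemma prog_meas_len[simp]: "meas_len d (prog_meas d q m)"
  by (cases m) auto

lemma prog_list_mono:
  assumes "length xs = d" "length ys = d" "q < d" "xs = ys \<or> lex_lt xs ys"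
  shows "prog_list d q xs = prog_list d q ys \<or> lex_lt (prog_list d q xs) (prog_list d q ys)"
proof (cases "xs = ys")
  case False
  then have "lex_lt xs ys" using assms by auto
  then obtain k where k: "k < d" "\<forall>j<k. xs!j = ys!j" "xs!k < ys!k"
    using lex_lt_nth[OF assms(1,2)] by auto
  show ?thesis
  proof (cases "k \<le> q")
    case True
    have "\<forall>j<k. prog_list d q xs ! j = prog_list d q ys ! j"
      using k True assms(3) by (auto simp: prog_list_nth)
    moreover have "prog_list d q xs ! k < prog_list d q ys ! k"
      using k True by (auto simp: prog_list_nth)
    ultimately show ?thesis using lex_lt_nth[of "prog_list d q xs" d "prog_list d q ys"] k by auto
  next
    case False
    then have "prog_list d q xs = prog_list d q ys" using k assms
      by (auto simp: list_eq_iff_nth_eq prog_list_nth)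
    then show ?thesis by simp
  qed
qed simp

lemma prog_meas_mono:
  assumes "meas_len d a" "meas_len d b" "q < d" "meas_le a b"
  shows "meas_le (prog_meas d q a) (prog_meas d q b)"
  using assms prog_list_mono[of _ d _ q]
  by (cases a; cases b) auto

lemma take_prog_list_below:
  assumes "k < q" "q < d" "length x = d"
  shows "take (Suc k) (prog_list d q x) = take (Suc k) x"
  using assms by (auto simp: list_eq_iff_nth_eq prog_list_nth)

lemma meas_le_i_conv:
  "meas_le_i q a b \<longleftrightarrow> meas_le (map_option (take (Suc q)) a) (map_option (take (Suc q)) b)"
  by (cases a; cases b) (auto simp: meas_le_i_def meas_lt_i_def meas_eq_i_def)

lemma lex_le_take:
  assumes "length xs = d" "length ys = d" "xs = ys \<or> lex_lt xs ys" "m \<le> d"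
  shows "take m xs = take m ys \<or> lex_lt (take m xs) (take m ys)"
proof (cases "xs = ys")
  case False
  then have "lex_lt xs ys" using assms by auto
  then obtain k where k: "k < d" "\<forall>j<k. xs!j = ys!j" "xs!k < ys!k"
    using lex_lt_nth[OF assms(1,2)] by auto
  show ?thesis
  proof (cases "k < m")
    case True
    then show ?thesis using lex_lt_nth[of "take m xs" m "take m ys"] k assms by auto
  next
    case False
    then show ?thesis using k assms by (auto simp: list_eq_iff_nth_eq)
  qed
qed simp

lemma meas_le_imp_le_i:
  assumes "meas_len d a" "meas_len d b" "q < d" "meas_le a b"
  shows "meas_le_i q a b"
  unfolding meas_le_i_conv using assms lex_le_take[of _ d _ "Suc q"]
  by (cases a; cases b) auto

lemma meas_le_i_trans:
  assumes "meas_len d a" "meas_len d b" "meas_len d c" "q < d" "meas_le_i q a b" "meas_le_i q b c"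
  shows "meas_le_i q a c"
proof -
  have w: "meas_len (Suc q) (map_option (take (Suc q)) x)" if "meas_len d x" for x
    using that assms(4) by (cases x) auto
  show ?thesis using assms meas_le_trans[OF w w w] unfolding meas_le_i_conv
    by blast
qed

lemma meas_le_of_le_i_zero_tail:
  assumes "length xs = d" "meas_len d b" "q < d" "\<forall>j. q < j \<longrightarrow> j < d \<longrightarrow> xs!j = 0"
    "meas_le_i q (Some xs) b"
  shows "meas_le (Some xs) b"
proof (cases b)
  case (Some ys)
  have ly: "length ys = d" using assms Some by auto
  have "take (Suc q) xs = take (Suc q) ys \<or> lex_lt (take (Suc q) xs) (take (Suc q) ys)"
    using assms(5) Some by (simp add: meas_le_i_conv)
  then show ?thesis
  proof
    assume "take (Suc q) xs = take (Suc q) ys"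
    then have "\<forall>j<Suc q. xs!j = ys!j" using assms ly by (metis nth_take)
    then show ?thesis
      using lex_le_of_prefix_eq_zero_tail[OF assms(1) ly, of "Suc q"] assms(4) Some by auto
  next
    assume "lex_lt (take (Suc q) xs) (take (Suc q) ys)"
    then obtain k where k: "k < Suc q" "\<forall>j<k. take (Suc q) xs!j = take (Suc q) ys!j"
        "take (Suc q) xs!k < take (Suc q) ys!k"
      using lex_lt_nth[of "take (Suc q) xs" "Suc q" "take (Suc q) ys"] assms ly by auto
    then have "\<forall>j<k. xs!j = ys!j" "xs!k < ys!k" by auto
    have "k < d" using k(1) assms(3) by simp
    then have "lex_lt xs ys"
      using lex_lt_nth[OF assms(1) ly] \<open>\<forall>j<k. xs!j = ys!j\<close> \<open>xs!k < ys!k\<close> by blast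
    then show ?thesis using Some by simp
  qed
qed simp

lemma prog_list_zero_above: "\<forall>j. q < j \<longrightarrow> j < d \<longrightarrow> prog_list d q xs ! j = 0"
  by (auto simp: prog_list_nth)

lemma prog_list_le_of_first_diff:
  assumes "length xs = d" "length ys = d" "r < d" "k \<le> r" "\<forall>j<k. xs!j = ys!j" "xs!k < ys!k"
  shows "prog_list d r xs = ys \<or> lex_lt (prog_list d r xs) ys"
proof -
  have below: "\<forall>j<k. prog_list d r xs ! j = ys ! j" using assms by (simp add: prog_list_nth)
  have "prog_list d r xs ! k \<le> ys ! k" using assms by (auto simp: prog_list_nth)
  then consider "prog_list d r xs ! k < ys ! k" | "prog_list d r xs ! k = ys ! k" "k = r"
    using assms by (fastforce simp: prog_list_nth)
  then show ?thesis
  proof cases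
    case 1
    have "k < d" using assms by simp
    then have "lex_lt (prog_list d r xs) ys"
      unfolding lex_lt_nth[OF prog_list_length assms(2)] using 1 below by blast
    then show ?thesis ..
  next
    case 2
    then have "\<forall>j<Suc r. prog_list d r xs ! j = ys ! j" using below less_Suc_eq by auto
    then show ?thesis
      using lex_le_of_prefix_eq_zero_tail[of "prog_list d r xs" d ys "Suc r"] assms
        prog_list_zero_above
      by simp
  qed
qed

lemma first_diff_of_prog_list_le:
  assumes "length xs = d" "length ys = d" "q < d" "odd q"
    and "prog_list d q xs = ys \<or> lex_lt (prog_list d q xs) ys"
  shows "\<exists>k\<le>q. (\<forall>j<k. xs!j = ys!j) \<and> xs!k < ys!k"
proof (cases "prog_list d q xs = ys")
  case True
  then show ?thesis using assms by (auto simp: prog_list_nth intro!: exI[of _ q])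
next
  case False
  then obtain k where k: "k < d" "\<forall>j<k. prog_list d q xs!j = ys!j" "prog_list d q xs!k < ys!k"
    using assms(5) lex_lt_nth[of "prog_list d q xs" d ys] assms by auto
  show ?thesis
  proof (cases "k \<le> q")
    case True
    then show ?thesis using k assms
      by (intro exI[of _ k]) (auto simp: prog_list_nth split: if_splits)
  next
    case False
    then have eq: "prog_list d q xs!j = ys!j" if "j \<le> q" for j using k(2) that by auto
    have "\<forall>j<q. xs!j = ys!j"
    proof (intro allI impI)
      fix j assume "j < q"
      then show "xs!j = ys!j" using eq[of j] assms by (simp add: prog_list_nth)
    qed
    moreover have "Suc (xs!q) = ys!q" using eq[of q] assms by (simp add: prog_list_nth)
    ultimately show ?thesis by (intro exI[of _ q]) auto
  qed
qed

lemma lex_lt_take_iff_prog_list: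
  assumes "length xs = d" "length ys = d" "q < d" "odd q"
  shows "lex_lt (take (Suc q) xs) (take (Suc q) ys) \<longleftrightarrow>
      (prog_list d q xs = ys \<or> lex_lt (prog_list d q xs) ys)"
proof -
  have "lex_lt (take (Suc q) xs) (take (Suc q) ys) \<longleftrightarrow> (\<exists>k\<le>q. (\<forall>j<k. xs!j = ys!j) \<and> xs!k < ys!k)"
    using lex_lt_nth[of "take (Suc q) xs" "Suc q" "take (Suc q) ys"] assms
    by (auto simp: less_Suc_eq_le)
  then show ?thesis
    using first_diff_of_prog_list_le[OF assms] prog_list_le_of_first_diff[OF assms(1-3)] by blast
qed

lemma prog_cond_iff_prog_meas_le:
  assumes "meas_len d (\<rho> w)" "meas_len d m" "p v < d"
  shows "prog_cond p \<rho> v w m \<longleftrightarrow> meas_le (prog_meas d (p v) (\<rho> w)) m"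
proof (cases "even (p v)")
  case True
  have R: "meas_le (prog_meas d (p v) (\<rho> w)) m \<longleftrightarrow> meas_le_i (p v) (prog_meas d (p v) (\<rho> w)) m"
  proof (cases "\<rho> w")
    case None then show ?thesis by (cases m) (auto simp: meas_le_i_conv)
  next
    case (Some xs)
    show ?thesis using meas_le_imp_le_i[of d "prog_meas d (p v) (\<rho> w)" m "p v"]
        meas_le_of_le_i_zero_tail[of "prog_list d (p v) xs" d m "p v"] assms Some
          prog_list_zero_above[of "p v" d xs] by auto
  qed
  have tk: "map_option (take (Suc (p v))) (prog_meas d (p v) (\<rho> w))
      = map_option (take (Suc (p v))) (\<rho> w)"
    using True assms by (cases "\<rho> w") (auto simp: list_eq_iff_nth_eq prog_list_nth less_Suc_eq)
  show ?thesis unfolding prog_cond_def using True R tk by (simp add: meas_le_i_conv)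
next
  case False
  show ?thesis
  proof (cases "\<rho> w")
    case None then show ?thesis using False unfolding prog_cond_def
      by (cases m) (auto simp: meas_lt_i_def)
  next
    case S: (Some xs)
    show ?thesis
    proof (cases m)
      case None then show ?thesis using False S unfolding prog_cond_def
        by (auto simp: meas_lt_i_def)
    next
      case (Some ys)
      then show ?thesis using False S assms lex_lt_take_iff_prog_list[of xs d ys "p v"]
        unfolding prog_cond_def
        by (auto simp: meas_lt_i_def)
    qed
  qed
qed

definition exceeds_below :: "nat \<Rightarrow> nat list \<Rightarrow> meas \<Rightarrow> bool" where
  "exceeds_below q xs m \<longleftrightarrow> (case m of None \<Rightarrow> True
     | Some ys \<Rightarrow> \<exists>k<q. (\<forall>j<k. xs!j = ys!j) \<and> xs!k < ys!k)"

lemma first_diff_below_of_lex_le: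
  assumes "length xs = length ys" "xs = ys \<or> lex_lt xs ys" "ys ! q < xs ! q" "q < length xs"
  shows "\<exists>k<q. (\<forall>j<k. xs!j = ys!j) \<and> xs!k < ys!k"
proof -
  have "lex_lt xs ys" using assms(2,3) by auto
  then obtain k where k: "k < length xs" "\<forall>j<k. xs!j = ys!j" "xs!k < ys!k"
    using lex_lt_nth[OF refl assms(1)[symmetric]] by blast
  have "k < q"
  proof (rule ccontr)
    assume "\<not> k < q"
    then have "k = q \<or> q < k" by linarith
    then show False using k assms(3) by auto
  qed
  then show ?thesis using k by blast
qed

locale pgame =
  fixes V :: "'v set" and E :: "('v \<times> 'v) set" and p :: "'v \<Rightarrow> nat" and VE :: "'v set"
  assumes pg: "parity_game V E p VE"
begin

abbreviation "d \<equiv> dim V p"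

lemma finite_V: "finite V" using pg by (simp add: parity_game_def)

lemma edge_in_V: "(u, w) \<in> E \<Longrightarrow> u \<in> V \<and> w \<in> V" using pg by (auto simp: parity_game_def)

lemma edge_total: "u \<in> V \<Longrightarrow> \<exists>w. (u, w) \<in> E" using pg by (simp add: parity_game_def)

lemma VE_subset: "VE \<subseteq> V" using pg by (simp add: parity_game_def)

lemma post_subset: "post E u \<subseteq> V" using edge_in_V by (auto simp: post_def)

lemma post_nonempty: "u \<in> V \<Longrightarrow> post E u \<noteq> {}" using edge_total by (auto simp: post_def)

lemma finite_post: "finite (post E u)" using post_subset finite_V finite_subset by blast

lemma p_lt_d: "v \<in> V \<Longrightarrow> p v < d"
  unfolding dim_def using finite_V by (simp add: le_imp_less_Suc)

lemma Some_MM: "Some xs \<in> MM V p \<longleftrightarrow> length xs = d \<and>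
      (\<forall>i < d. (even i \<longrightarrow> xs ! i = 0) \<and> (odd i \<longrightarrow> xs ! i \<le> card {v \<in> V. p v = i}))"
  unfolding MM_def by auto

lemma None_MM[simp]: "None \<in> MM V p" unfolding MM_def by auto

lemma MM_meas_len: "m \<in> MM V p \<Longrightarrow> meas_len d m"
  by (cases m) (auto simp: Some_MM)

lemma finite_MM: "finite (MM V p)"
proof -
  have "MM V p \<subseteq> insert None (Some ` {xs. set xs \<subseteq> {0..card V} \<and> length xs = d})"
  proof
    fix m assume m: "m \<in> MM V p"
    show "m \<in> insert None (Some ` {xs. set xs \<subseteq> {0..card V} \<and> length xs = d})"
    proof (cases m)
      case (Some xs)
      have "\<forall>x\<in>set xs. x \<le> card V"
      proof
        fix x assume "x \<in> set xs"
        then obtain i where i: "i < length xs" "xs!i = x" by (auto simp: in_set_conv_nth)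
        have "card {v \<in> V. p v = i} \<le> card V" using finite_V by (intro card_mono) auto
        then show "x \<le> card V" using m Some i by (auto simp: Some_MM)
      qed
      then show ?thesis using m Some by (auto simp: Some_MM)
    qed simp
  qed
  moreover have "finite (insert None (Some ` {xs. set xs \<subseteq> {0..card V} \<and> length xs = d}))"
    by (intro finite_insert[THEN iffD2] finite_imageI finite_lists_length_eq) simp
  ultimately show ?thesis using finite_subset by blast
qed

lemma zeros_in_MM: "Some (replicate d 0) \<in> MM V p"
  by (auto simp: Some_MM)

lemma zeros_le: assumes "meas_len d m" shows "meas_le (Some (replicate d 0)) m"
proof (cases m)
  case (Some a)
  then show ?thesis using lex_le_of_prefix_eq_zero_tail[of "replicate d 0" d a 0] assms by auto
qed simp

lemma Prog_spec:
  assumes "\<rho> w \<in> MM V p" "v \<in> V"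
  shows "Prog V p \<rho> v w \<in> MM V p \<and> meas_le (prog_meas d (p v) (\<rho> w)) (Prog V p \<rho> v w)
     \<and> (\<forall>m\<in>MM V p. meas_le (prog_meas d (p v) (\<rho> w)) m \<longrightarrow> meas_le (Prog V p \<rho> v w) m)"
proof -
  have pc: "prog_cond p \<rho> v w m \<longleftrightarrow> meas_le (prog_meas d (p v) (\<rho> w)) m" if "m \<in> MM V p" for m
    using prog_cond_iff_prog_meas_le[of d \<rho> w m p v] MM_meas_len[OF assms(1)] MM_meas_len[OF that]
      p_lt_d[OF assms(2)] by auto
  let ?S = "{m \<in> MM V p. meas_le (prog_meas d (p v) (\<rho> w)) m}"
  have "\<exists>m\<in>?S. \<forall>x\<in>?S. meas_le m x"
  proof (rule finite_total_has_least)
    show "finite ?S" using finite_MM by auto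
    show "?S \<noteq> {}" using None_MM by fastforce
    show "\<forall>a\<in>?S. \<forall>b\<in>?S. meas_le a b \<or> meas_le b a" using meas_le_total MM_meas_len by blast
    show "\<forall>a\<in>?S. \<forall>b\<in>?S. \<forall>c\<in>?S. meas_le a b \<longrightarrow> meas_le b c \<longrightarrow> meas_le a c"
      using meas_le_trans MM_meas_len by blast
  qed
  then obtain m0 where m0: "m0 \<in> ?S" "\<forall>x\<in>?S. meas_le m0 x" by blast
  have ex: "\<exists>!m. m \<in> MM V p \<and> prog_cond p \<rho> v w m
      \<and> (\<forall>m' \<in> MM V p. prog_cond p \<rho> v w m' \<longrightarrow> meas_le m m')"
  proof (rule ex1I[of _ m0])
    show "m0 \<in> MM V p \<and> prog_cond p \<rho> v w m0 \<and> (\<forall>m' \<in> MM V p. prog_cond p \<rho> v w m' \<longrightarrow> meas_le m0 m')"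
      using m0 pc by auto
  next
    fix m assume m: "m \<in> MM V p \<and> prog_cond p \<rho> v w m
        \<and> (\<forall>m' \<in> MM V p. prog_cond p \<rho> v w m' \<longrightarrow> meas_le m m')"
    then have "meas_le m m0" "meas_le m0 m" using m0 pc by auto
    then show "m = m0" using meas_le_antisym MM_meas_len m m0 by blast
  qed
  have "Prog V p \<rho> v w \<in> MM V p \<and> prog_cond p \<rho> v w (Prog V p \<rho> v w) \<and>
      (\<forall>m' \<in> MM V p. prog_cond p \<rho> v w m' \<longrightarrow> meas_le (Prog V p \<rho> v w) m')"
    unfolding Prog_def by (rule theI'[OF ex])
  then show ?thesis using pc by auto
qed

lemma gppm_prog_meas_le:
  assumes "\<forall>v\<in>V. \<rho> v \<in> MM V p" "u \<in> V" "w \<in> post E u" "meas_le_i (p u) (Prog V p \<rho> u w) (\<rho> u)"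
  shows "meas_le (prog_meas d (p u) (\<rho> w)) (\<rho> u)"
proof -
  have wV: "w \<in> V" using assms post_subset by auto
  have wMM: "\<rho> w \<in> MM V p" using assms(1) wV by auto
  note P = Prog_spec[where \<rho> = \<rho> and w = w, OF wMM assms(2)]
  have q: "p u < d" using p_lt_d assms by auto
  have wlr: "meas_len d (\<rho> u)" "meas_len d (\<rho> w)" using MM_meas_len assms wV by auto
  have "meas_le_i (p u) (prog_meas d (p u) (\<rho> w)) (Prog V p \<rho> u w)"
    using meas_le_imp_le_i[of d _ _ "p u"] P q MM_meas_len by auto
  then have L: "meas_le_i (p u) (prog_meas d (p u) (\<rho> w)) (\<rho> u)"
    using meas_le_i_trans[of d _ "Prog V p \<rho> u w" "\<rho> u" "p u"] assms(4) P q wlr MM_meas_len by auto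
  show ?thesis
  proof (cases "\<rho> w")
    case None
    then show ?thesis using L by (cases "\<rho> u") (auto simp: meas_le_i_conv)
  next
    case (Some xs)
    then show ?thesis
      using meas_le_of_le_i_zero_tail[of "prog_list d (p u) xs" d "\<rho> u" "p u"] L q wlr
        prog_list_zero_above
      by auto
  qed
qed

lemma Prog_le_i_of_prog_meas_le:
  assumes "\<rho> w \<in> MM V p" "u \<in> V" "c \<in> MM V p" "meas_le (prog_meas d (p u) (\<rho> w)) c" "meas_le c x"
    "x \<in> MM V p"
  shows "meas_le_i (p u) (Prog V p \<rho> u w) x"
proof -
  note P = Prog_spec[where \<rho> = \<rho> and w = w, OF assms(1,2)]
  have "meas_le (Prog V p \<rho> u w) c" using P assms by auto
  then have "meas_le (Prog V p \<rho> u w) x" using meas_le_trans MM_meas_len P assms by blast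
  then show ?thesis using meas_le_imp_le_i MM_meas_len P assms p_lt_d by blast
qed

end

text \<open>The positions of priority i in the maximal i-dominated prefix of a play; the degree of that
  stretch is their number (lemma degree_eq_card).\<close>

definition stretch_positions :: "('v \<Rightarrow> nat) \<Rightarrow> (nat \<Rightarrow> 'v) \<Rightarrow> nat \<Rightarrow> nat set" where
  "stretch_positions p \<pi> i = {j. p (\<pi> j) = i \<and> (\<forall>k\<le>j. i \<le> p (\<pi> k))}"

definition inf_prios :: "('v \<Rightarrow> nat) \<Rightarrow> (nat \<Rightarrow> 'v) \<Rightarrow> nat set" where
  "inf_prios p \<pi> = {k. \<exists>\<^sub>\<infinity> i. p (\<pi> i) = k}"

lemma even_wins_iff_min_inf_prios: "even_wins p \<pi> \<longleftrightarrow> even (Min (inf_prios p \<pi>))"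
  by (simp add: even_wins_def inf_prios_def)

lemma dominated_prefix_positions_subset:
  assumes "Min (p ` \<pi> ` {..<n}) = i"
  shows "{j. j < n \<and> p (\<pi> j) = i} \<subseteq> stretch_positions p \<pi> i"
proof
  fix j assume j: "j \<in> {j. j < n \<and> p (\<pi> j) = i}"
  have "i \<le> p (\<pi> k)" if "k \<le> j" for k
    using Min_le[of "p ` \<pi> ` {..<n}" "p (\<pi> k)"] that j assms by auto
  then show "j \<in> stretch_positions p \<pi> i" using j by (simp add: stretch_positions_def)
qed

lemma degree_eq_card:
  assumes "finite (stretch_positions p \<pi> i)"
  shows "degree p \<pi> i = card (stretch_positions p \<pi> i)"
proof -
  let ?A = "{card {j. j < n \<and> p (\<pi> j) = i} | n. 0 < n \<and> Min (p ` \<pi> ` {..<n}) = i}"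
  note sub = dominated_prefix_positions_subset[of p \<pi>]
  have bound: "x \<le> card (stretch_positions p \<pi> i)" if x: "x \<in> ?A" for x
  proof -
    obtain n where n: "x = card {j. j < n \<and> p (\<pi> j) = i}" "0 < n" "Min (p ` \<pi> ` {..<n}) = i"
      using x by blast
    show ?thesis using card_mono[OF assms sub[OF n(3)]] n(1) by simp
  qed
  show ?thesis
  proof (cases "stretch_positions p \<pi> i = {}")
    case True
    have "?A = {}"
    proof (rule ccontr)
      assume "?A \<noteq> {}"
      then obtain n where n: "0 < n" "Min (p ` \<pi> ` {..<n}) = i" by auto
      have "Min (p ` \<pi> ` {..<n}) \<in> p ` \<pi> ` {..<n}" using n by (intro Min_in) auto
      then obtain j where "j < n" "p (\<pi> j) = i" using n by auto
      then show False using sub[OF n(2)] True by auto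
    qed
    note e = this
    show ?thesis unfolding degree_def by (subst e) (simp add: True)
  next
    case False
    define m where "m = Max (stretch_positions p \<pi> i)"
    have mS: "m \<in> stretch_positions p \<pi> i" using False assms m_def by auto
    have leq: "j \<le> m" if "j \<in> stretch_positions p \<pi> i" for j using that assms m_def by auto
    have mn: "Min (p ` \<pi> ` {..<Suc m}) = i"
    proof (rule Min_eqI)
      show "finite (p ` \<pi> ` {..<Suc m})" by auto
      show "\<And>y. y \<in> p ` \<pi> ` {..<Suc m} \<Longrightarrow> i \<le> y" using mS by (auto simp: stretch_positions_def)
      show "i \<in> p ` \<pi> ` {..<Suc m}" using mS by (auto simp: stretch_positions_def)
    qed
    have eq: "{j. j < Suc m \<and> p (\<pi> j) = i} = stretch_positions p \<pi> i"
    proof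
      show "stretch_positions p \<pi> i \<subseteq> {j. j < Suc m \<and> p (\<pi> j) = i}"
        using leq by (auto simp: stretch_positions_def less_Suc_eq_le)
      show "{j. j < Suc m \<and> p (\<pi> j) = i} \<subseteq> stretch_positions p \<pi> i" using sub[OF mn] .
    qed
    have "\<exists>n. card (stretch_positions p \<pi> i) = card {j. j < n \<and> p (\<pi> j) = i} \<and> 0 < n
        \<and> Min (p ` \<pi> ` {..<n}) = i"
      using mn eq by (intro exI[of _ "Suc m"]) simp
    then have mem: "card (stretch_positions p \<pi> i) \<in> ?A" by blast
    show ?thesis unfolding degree_def by (rule cSup_eq_maximum[OF mem bound])
  qed
qed

lemma INFM_shift: "(\<exists>\<^sub>\<infinity> j. P (j + t)) \<longleftrightarrow> (\<exists>\<^sub>\<infinity> j. P (j::nat))"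
proof
  assume "\<exists>\<^sub>\<infinity> j. P (j + t)"
  then have a: "\<forall>m. \<exists>n>m. P (n + t)" unfolding INFM_nat .
  show "\<exists>\<^sub>\<infinity> j. P j" unfolding INFM_nat
  proof
    fix m obtain n where "n > m" "P (n + t)" using a by blast
    then show "\<exists>n>m. P n" by (intro exI[of _ "n + t"]) auto
  qed
next
  assume a: "\<exists>\<^sub>\<infinity> j. P j"
  show "\<exists>\<^sub>\<infinity> j. P (j + t)" unfolding INFM_nat
  proof
    fix m
    obtain n where "n > m + t" "P n" using a unfolding INFM_nat by blast
    then show "\<exists>n>m. P (n + t)" by (intro exI[of _ "n - t"]) auto
  qed
qed

lemma inf_prios_shift: "inf_prios p (\<lambda>j. \<pi> (j + t)) = inf_prios p \<pi>"
  unfolding inf_prios_def using INFM_shift[of "\<lambda>j. p (\<pi> j) = _" t] by auto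

lemma even_wins_shift: "even_wins p (\<lambda>j. \<pi> (j + t)) \<longleftrightarrow> even_wins p \<pi>"
  by (simp add: even_wins_iff_min_inf_prios inf_prios_shift)

lemma even_wins_Suc: "even_wins p (\<lambda>j. \<pi> (Suc j)) \<longleftrightarrow> even_wins p \<pi>"
  using even_wins_shift[of p \<pi> 1] by simp

lemma stretch_positions_Suc:
  "stretch_positions p \<pi> i = (if p (\<pi> 0) = i then {0} else {}) \<union>
     (if i \<le> p (\<pi> 0) then Suc ` stretch_positions p (\<lambda>j. \<pi> (Suc j)) i else {})"
  (is "_ = ?R")
proof -
  have c: "(\<forall>k\<le>Suc j. P k) \<longleftrightarrow> P 0 \<and> (\<forall>k\<le>j. P (Suc k))" for P :: "nat \<Rightarrow> bool" and j
    unfolding less_Suc_eq_le[symmetric] by (rule All_less_Suc2)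
  have "Suc j \<in> stretch_positions p \<pi> i \<longleftrightarrow> i \<le> p (\<pi> 0)
      \<and> j \<in> stretch_positions p (\<lambda>j. \<pi> (Suc j)) i" for j
    unfolding stretch_positions_def using c[where P="\<lambda>k. i \<le> p (\<pi> k)" and j=j] by auto
  moreover have "0 \<in> stretch_positions p \<pi> i \<longleftrightarrow> p (\<pi> 0) = i" unfolding stretch_positions_def by auto
  ultimately have "j \<in> stretch_positions p \<pi> i \<longleftrightarrow> j \<in> ?R" for j by (cases j) auto
  then show ?thesis by blast
qed

lemma stretch_positions_shift:
  assumes "\<forall>k<s. i < p (\<pi> k)"
  shows "stretch_positions p \<pi> i = (\<lambda>m. s + m) ` stretch_positions p (\<lambda>m. \<pi> (s + m)) i"
proof (intro set_eqI iffI)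
  fix j assume j: "j \<in> stretch_positions p \<pi> i"
  then have "p (\<pi> j) = i" by (simp add: stretch_positions_def)
  then have "s \<le> j" using assms by (meson less_irrefl not_le)
  then obtain m where m: "j = s + m" using le_Suc_ex by blast
  have "\<forall>k\<le>m. i \<le> p (\<pi> (s + k))" using j m by (auto simp: stretch_positions_def)
  then show "j \<in> (\<lambda>m. s + m) ` stretch_positions p (\<lambda>m. \<pi> (s + m)) i"
    using j m by (auto simp: stretch_positions_def)
next
  fix j assume "j \<in> (\<lambda>m. s + m) ` stretch_positions p (\<lambda>m. \<pi> (s + m)) i"
  then obtain m where m: "j = s + m" "m \<in> stretch_positions p (\<lambda>m. \<pi> (s + m)) i" by blast
  have "i \<le> p (\<pi> k)" if "k \<le> j" for k
  proof (cases "k < s")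
    case False
    then have "k - s \<le> m" using that m(1) by auto
    then have "i \<le> p (\<pi> (s + (k - s)))" using m(2) by (simp add: stretch_positions_def)
    then show ?thesis using False by simp
  qed (use assms in force)
  then show "j \<in> stretch_positions p \<pi> i" using m by (simp add: stretch_positions_def)
qed

lemma map_upt_shift: "map \<pi> [0..<Suc m] = \<pi> 0 # map (\<lambda>j. \<pi> (Suc j)) [0..<m]"
proof -
  have "[0..<Suc m] = 0 # map Suc [0..<m]" by (simp add: upt_conv_Cons map_Suc_upt del: upt_Suc)
  then show ?thesis by simp
qed

lemma play_range: "play V E \<pi> \<Longrightarrow> range \<pi> \<subseteq> V"
  by (auto simp: play_def)

lemma play_edge: "play V E \<pi> \<Longrightarrow> \<pi> (Suc n) \<in> post E (\<pi> n)"
  by (auto simp: play_def post_def)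

lemma play_Suc: "play V E \<pi> \<Longrightarrow> play V E (\<lambda>j. \<pi> (Suc j))"
  by (auto simp: play_def)

context pgame
begin

lemma finite_inf_prios: "range \<pi> \<subseteq> V \<Longrightarrow> finite (inf_prios p \<pi>)"
proof -
  assume r: "range \<pi> \<subseteq> V"
  have "inf_prios p \<pi> \<subseteq> p ` V"
  proof
    fix k assume "k \<in> inf_prios p \<pi>"
    then have "infinite {i. p (\<pi> i) = k}" by (simp add: inf_prios_def INFM_iff_infinite)
    then obtain i where "p (\<pi> i) = k" using not_finite_existsD by auto
    then show "k \<in> p ` V" using r by auto
  qed
  then show ?thesis using finite_V finite_subset by blast
qed

lemma inf_prios_nonempty: "range \<pi> \<subseteq> V \<Longrightarrow> inf_prios p \<pi> \<noteq> {}"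
proof -
  assume r: "range \<pi> \<subseteq> V"
  have "(\<lambda>i. p (\<pi> i)) ` UNIV \<subseteq> p ` V" using r by auto
  then have "finite ((\<lambda>i. p (\<pi> i)) ` UNIV)" using finite_V finite_subset by blast
  then obtain y where "infinite ((\<lambda>i. p (\<pi> i)) -` {y})"
    using inf_img_fin_dom[of "\<lambda>i. p (\<pi> i)" UNIV] by auto
  then have "y \<in> inf_prios p \<pi>" by (simp add: inf_prios_def INFM_iff_infinite vimage_def)
  then show ?thesis by auto
qed

lemma Min_inf_prios:
  assumes "range \<pi> \<subseteq> V"
  shows "\<exists>N. \<forall>n\<ge>N. Min (inf_prios p \<pi>) \<le> p (\<pi> n)" "\<exists>\<^sub>\<infinity> n. p (\<pi> n) = Min (inf_prios p \<pi>)"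
proof -
  let ?k = "Min (inf_prios p \<pi>)"
  have kin: "?k \<in> inf_prios p \<pi>" using finite_inf_prios inf_prios_nonempty assms by auto
  then show "\<exists>\<^sub>\<infinity> n. p (\<pi> n) = Min (inf_prios p \<pi>)" by (simp add: inf_prios_def)
  have "finite {i. p (\<pi> i) = k}" if "k < ?k" for k
  proof -
    have "k \<notin> inf_prios p \<pi>" using that finite_inf_prios assms Min_le leD by blast
    then show ?thesis by (simp add: inf_prios_def INFM_iff_infinite)
  qed
  then have "finite (\<Union>k<?k. {i. p (\<pi> i) = k})" by auto
  then obtain N where N: "(\<Union>k<?k. {i. p (\<pi> i) = k}) \<subseteq> {..<N}" using finite_nat_bounded by blast
  show "\<exists>N. \<forall>n\<ge>N. Min (inf_prios p \<pi>) \<le> p (\<pi> n)"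
  proof (intro exI allI impI)
    fix n assume "N \<le> n"
    show "?k \<le> p (\<pi> n)"
    proof (rule ccontr)
      assume "\<not> ?k \<le> p (\<pi> n)"
      then have "n \<in> (\<Union>k<?k. {i. p (\<pi> i) = k})" by auto
      then have "n < N" using N by blast
      then show False using \<open>N \<le> n\<close> by simp
    qed
  qed
qed

lemma Min_inf_prios_eqI:
  assumes "range \<pi> \<subseteq> V" "\<forall>n\<ge>N. q \<le> p (\<pi> n)" "\<exists>\<^sub>\<infinity> n. p (\<pi> n) = q"
  shows "Min (inf_prios p \<pi>) = q"
proof (rule Min_eqI)
  show "finite (inf_prios p \<pi>)" using finite_inf_prios assms by auto
  show "q \<in> inf_prios p \<pi>" using assms by (simp add: inf_prios_def)
  fix k assume k: "k \<in> inf_prios p \<pi>"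
  show "q \<le> k"
  proof (rule ccontr)
    assume "\<not> q \<le> k"
    then have "{i. p (\<pi> i) = k} \<subseteq> {..<N}" using assms(2) by (auto simp: not_le)
    then have "finite {i. p (\<pi> i) = k}" using finite_subset by blast
    then show False using k by (simp add: inf_prios_def INFM_iff_infinite)
  qed
qed

lemma finite_stretch_positions:
  assumes "range \<pi> \<subseteq> V" "even_wins p \<pi>" "odd i"
  shows "finite (stretch_positions p \<pi> i)"
proof (rule ccontr)
  assume inf: "infinite (stretch_positions p \<pi> i)"
  have all: "\<forall>n\<ge>0. i \<le> p (\<pi> n)"
  proof (intro allI impI)
    fix n
    obtain j where "j \<ge> n" "j \<in> stretch_positions p \<pi> i"
      using inf infinite_nat_iff_unbounded_le by blast
    then show "i \<le> p (\<pi> n)" by (auto simp: stretch_positions_def)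
  qed
  have "stretch_positions p \<pi> i \<subseteq> {j. p (\<pi> j) = i}" by (auto simp: stretch_positions_def)
  then have "\<exists>\<^sub>\<infinity> n. p (\<pi> n) = i" using inf INFM_iff_infinite finite_subset by blast
  then have "Min (inf_prios p \<pi>) = i" using Min_inf_prios_eqI[OF assms(1) all] by blast
  then show False using assms by (simp add: even_wins_iff_min_inf_prios)
qed

definition theta_list :: "(nat \<Rightarrow> 'v) \<Rightarrow> nat list" where
  "theta_list \<pi> = map (\<lambda>i. if even i then 0 else degree p \<pi> i) [0..<d]"

lemma theta_eq_theta_list: "theta V p \<pi> = (if even_wins p \<pi> then Some (theta_list \<pi>) else None)"
  by (simp add: theta_def theta_list_def)

lemma theta_list_length[simp]: "length (theta_list \<pi>) = d" by (simp add: theta_list_def)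

lemma theta_list_nth: "i < d \<Longrightarrow> theta_list \<pi> ! i = (if even i then 0 else degree p \<pi> i)"
  by (simp add: theta_list_def)

lemma theta_meas_len[simp]: "meas_len d (theta V p \<pi>)" by (simp add: theta_eq_theta_list)

lemma theta_shift:
  assumes "range \<pi> \<subseteq> V"
  shows "theta V p \<pi> = prog_meas d (p (\<pi> 0)) (theta V p (\<lambda>j. \<pi> (Suc j)))"
proof (cases "even_wins p \<pi>")
  case False
  then show ?thesis by (simp add: theta_eq_theta_list even_wins_Suc)
next
  case True
  let ?\<pi>' = "\<lambda>j. \<pi> (Suc j)"
  let ?q = "p (\<pi> 0)"
  have r': "range ?\<pi>' \<subseteq> V" using assms by auto
  have T': "even_wins p ?\<pi>'" using True even_wins_Suc by blast
  have "theta_list \<pi> = prog_list d ?q (theta_list ?\<pi>')"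
  proof (rule nth_equalityI)
    show "length (theta_list \<pi>) = length (prog_list d ?q (theta_list ?\<pi>'))" by simp
    fix i assume "i < length (theta_list \<pi>)"
    then have i: "i < d" by simp
    show "theta_list \<pi> ! i = prog_list d ?q (theta_list ?\<pi>') ! i"
    proof (cases "even i")
      case True
      then show ?thesis using i by (auto simp: theta_list_nth prog_list_nth p_lt_d)
    next
      case False
      have f1: "finite (stretch_positions p \<pi> i)"
        using finite_stretch_positions assms True False by blast
      have f2: "finite (stretch_positions p ?\<pi>' i)"
        using finite_stretch_positions r' T' False by blast
      have cS: "card (Suc ` stretch_positions p ?\<pi>' i) = card (stretch_positions p ?\<pi>' i)"
        by (simp add: card_image)
      have cS2: "card (insert 0 (Suc ` stretch_positions p ?\<pi>' i)) = Suc
          (card (stretch_positions p ?\<pi>' i))"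
        using f2 cS by (subst card_insert_disjoint) auto
      have qd: "?q < d" using assms p_lt_d by auto
      consider "i < ?q" | "i = ?q" | "?q < i" by linarith
      then show ?thesis
      proof cases
        case 1
        then have "stretch_positions p \<pi> i = Suc ` stretch_positions p ?\<pi>' i"
          by (subst stretch_positions_Suc) auto
        then show ?thesis using 1 i False f1 f2 cS
          by (simp add: theta_list_nth prog_list_nth degree_eq_card)
      next
        case 2
        then have "stretch_positions p \<pi> i = insert 0 (Suc ` stretch_positions p ?\<pi>' i)"
          by (subst stretch_positions_Suc) auto
        then show ?thesis using 2 i False f1 f2 cS2
          by (simp add: theta_list_nth prog_list_nth degree_eq_card)
      next
        case 3
        then have "stretch_positions p \<pi> i = {}" by (subst stretch_positions_Suc) auto
        then show ?thesis using 3 i False f1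
          by (simp add: theta_list_nth prog_list_nth degree_eq_card)
      qed
    qed
  qed
  then show ?thesis using True T' by (simp add: theta_eq_theta_list)
qed

lemma theta_list_common_suffix:
  assumes r1: "range \<pi>1 \<subseteq> V" and r2: "range \<pi>2 \<subseteq> V"
    and suffix: "\<forall>m. \<pi>1 (s1 + m) = \<pi>2 (s2 + m)"
    and pre1: "\<forall>k<s1. q \<le> p (\<pi>1 k)" and pre2: "\<forall>k<s2. q \<le> p (\<pi>2 k)"
  shows "even_wins p \<pi>1 \<longleftrightarrow> even_wins p \<pi>2"
    and "\<lbrakk>even_wins p \<pi>1; i < q; i < d\<rbrakk> \<Longrightarrow> theta_list \<pi>1 ! i = theta_list \<pi>2 ! i"
proof -
  have "(\<lambda>j. \<pi>1 (j + s1)) = (\<lambda>j. \<pi>2 (j + s2))" using suffix by (auto simp: add.commute)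
  then show ew: "even_wins p \<pi>1 \<longleftrightarrow> even_wins p \<pi>2"
    using even_wins_shift[of p \<pi>1 s1] even_wins_shift[of p \<pi>2 s2] by simp
  assume w1: "even_wins p \<pi>1" and iq: "i < q" and id: "i < d"
  show "theta_list \<pi>1 ! i = theta_list \<pi>2 ! i"
  proof (cases "even i")
    case False
    let ?S = "stretch_positions p (\<lambda>m. \<pi>1 (s1 + m)) i"
    have "stretch_positions p \<pi>1 i = (\<lambda>m. s1 + m) ` ?S"
      using stretch_positions_shift[of s1 i p \<pi>1] pre1 iq by fastforce
    moreover have "stretch_positions p \<pi>2 i = (\<lambda>m. s2 + m) ` ?S"
      using stretch_positions_shift[of s2 i p \<pi>2] pre2 iq suffix by fastforce
    moreover have "finite (stretch_positions p \<pi>1 i)" "finite (stretch_positions p \<pi>2 i)"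
      using finite_stretch_positions r1 r2 w1 ew False by blast+
    ultimately show ?thesis using id False by (simp add: theta_list_nth degree_eq_card card_image)
  qed (use id in \<open>simp add: theta_list_nth\<close>)
qed

lemma even_wins_of_progress_chain:
  assumes r: "range \<pi> \<subseteq> V" and len: "\<And>n. length (xs n) = d"
    and chain: "\<And>n. meas_le (Some (prog_list d (p (\<pi> n)) (xs (Suc n)))) (Some (xs n))"
  shows "even_wins p \<pi>"
proof (rule ccontr)
  assume "\<not> even_wins p \<pi>"
  let ?k = "Min (inf_prios p \<pi>)"
  have kodd: "odd ?k" using \<open>\<not> even_wins p \<pi>\<close> by (simp add: even_wins_iff_min_inf_prios)
  obtain N where N: "\<forall>n\<ge>N. ?k \<le> p (\<pi> n)" using Min_inf_prios(1)[OF r] by blast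
  have kinf: "\<exists>\<^sub>\<infinity> n. p (\<pi> n) = ?k" using Min_inf_prios(2)[OF r] .
  then obtain n0 where "p (\<pi> n0) = ?k" by (meson INFM_EX)
  moreover have "\<pi> n0 \<in> V" using r by auto
  ultimately have kd: "?k < d" using p_lt_d by metis
  define T where "T n = take (Suc ?k) (xs n)" for n
  have step: "(T (Suc n), T n) \<in> (lex less_than)\<^sup>=
      \<and> (p (\<pi> n) = ?k \<longrightarrow> (T (Suc n), T n) \<in> lex less_than)"
    if "n \<ge> N" for n
  proof (cases "p (\<pi> n) = ?k")
    case True
    then have "lex_lt (T (Suc n)) (T n)"
      using lex_lt_take_iff_prog_list[of "xs (Suc n)" d "xs n" ?k] chain[of n] kd kodd len
      by (simp add: T_def)
    then show ?thesis using len kd by (simp add: lex_lt_iff_lex T_def)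
  next
    case False
    then have "?k < p (\<pi> n)" using N that by force
    then have "take (Suc ?k) (prog_list d (p (\<pi> n)) (xs (Suc n))) = T (Suc n)"
      using take_prog_list_below p_lt_d r len by (simp add: T_def range_subsetD)
    then have "T (Suc n) = T n \<or> lex_lt (T (Suc n)) (T n)"
      using lex_le_take[of "prog_list d (p (\<pi> n)) (xs (Suc n))" d "xs n" "Suc ?k"]
        chain[of n] len kd
      by (simp add: T_def)
    then show ?thesis using False len kd by (auto simp: lex_lt_iff_lex T_def)
  qed
  show False
  proof (rule wf_no_frequent_descent[OF wf_lex[OF wf_less_than] lex_transI[OF trans_less_than]])
    show "(T (Suc n), T n) \<in> (lex less_than)\<^sup>=" if "n \<ge> N" for n using step that by blast
    have "\<exists>\<^sub>\<infinity>n. p (\<pi> n) = ?k \<and> n \<ge> N" using INFM_conjI[OF kinf MOST_ge_nat] .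
    then show "\<exists>\<^sub>\<infinity>n. (T (Suc n), T n) \<in> lex less_than"
      by (rule INFM_mono) (use step in blast)
  qed
qed

lemma theta_suffix_after_least_priority:
  assumes r: "range \<pi> \<subseteq> V" and ew: "even_wins p \<pi>"
    and low: "\<And>n. n \<ge> M \<Longrightarrow> Min (inf_prios p \<pi>) \<le> p (\<pi> n)"
    and M: "p (\<pi> M) = Min (inf_prios p \<pi>)"
  shows "theta V p (\<lambda>j. \<pi> (j + M)) = Some (replicate d 0)"
proof -
  let ?k = "Min (inf_prios p \<pi>)" and ?\<sigma> = "\<lambda>j. \<pi> (j + Suc M)"
  have kd: "?k < d" using M p_lt_d r by (metis rangeI subsetD)
  have keven: "even ?k" using ew by (simp add: even_wins_iff_min_inf_prios)
  have ew': "even_wins p ?\<sigma>" using ew even_wins_shift by blast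
  have "theta V p (\<lambda>j. \<pi> (j + M)) = prog_meas d ?k (theta V p ?\<sigma>)"
    using theta_shift[of "\<lambda>j. \<pi> (j + M)"] r M by auto
  also have "\<dots> = Some (prog_list d ?k (theta_list ?\<sigma>))" using ew' by (simp add: theta_eq_theta_list)
  also have "prog_list d ?k (theta_list ?\<sigma>) = replicate d 0"
  proof (rule nth_equalityI)
    fix i assume "i < length (prog_list d ?k (theta_list ?\<sigma>))"
    then have i: "i < d" by simp
    have "stretch_positions p ?\<sigma> i = {}" if "i < ?k"
    proof -
      have "p (?\<sigma> j) \<noteq> i" for j using low[of "j + Suc M"] that by auto
      then show ?thesis by (auto simp: stretch_positions_def)
    qed
    then show "prog_list d ?k (theta_list ?\<sigma>) ! i = replicate d 0 ! i"
      using i keven kd by (auto simp: prog_list_nth theta_list_nth degree_eq_card)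
  qed simp
  finally show ?thesis .
qed

lemma theta_le_progress_chain:
  assumes r: "range \<pi> \<subseteq> V" and \<rho>MM: "\<forall>v\<in>V. \<rho> v \<in> MM V p"
    and chain: "\<forall>n. meas_le (prog_meas d (p (\<pi> n)) (\<rho> (\<pi> (Suc n)))) (\<rho> (\<pi> n))"
  shows "meas_le (theta V p \<pi>) (\<rho> (\<pi> 0))"
proof (cases "\<rho> (\<pi> 0)")
  case (Some x0)
  have inV: "\<pi> n \<in> V" for n using r by auto
  have \<rho>len: "meas_len d (\<rho> (\<pi> n))" for n using MM_meas_len \<rho>MM inV by blast
  have not_top: "\<rho> (\<pi> n) \<noteq> None" for n
  proof (induction n)
    case (Suc n)
    then show ?case using chain by (metis meas_le_simps(2) not_None_eq prog_meas_simps(1))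
  qed (use Some in simp)
  define xs where "xs n = the (\<rho> (\<pi> n))" for n
  have \<rho>_xs: "\<rho> (\<pi> n) = Some (xs n)" for n using not_top xs_def by auto
  have ew: "even_wins p \<pi>"
    using even_wins_of_progress_chain[OF r, of xs] \<rho>len chain by (simp add: \<rho>_xs)
  obtain N where N: "\<forall>n\<ge>N. Min (inf_prios p \<pi>) \<le> p (\<pi> n)" using Min_inf_prios(1)[OF r] by blast
  obtain M where "M \<ge> N" and M: "p (\<pi> M) = Min (inf_prios p \<pi>)"
    using Min_inf_prios(2)[OF r] unfolding INFM_nat_le by blast
  then have low: "\<forall>n\<ge>M. Min (inf_prios p \<pi>) \<le> p (\<pi> n)" using N by simp
  have "meas_le (theta V p (\<lambda>j. \<pi> (j + n))) (\<rho> (\<pi> n))" if "n \<le> M" for n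
    using that
  proof (induction n rule: inc_induct)
    case base
    show ?case using theta_suffix_after_least_priority[OF r ew _ M] low zeros_le \<rho>len by simp
  next
    case (step n)
    have "theta V p (\<lambda>j. \<pi> (j + n)) = prog_meas d (p (\<pi> n)) (theta V p (\<lambda>j. \<pi> (j + Suc n)))"
      using theta_shift[of "\<lambda>j. \<pi> (j + n)"] r by auto
    also have "meas_le \<dots> (prog_meas d (p (\<pi> n)) (\<rho> (\<pi> (Suc n))))"
      using prog_meas_mono step.IH \<rho>len p_lt_d inV theta_meas_len by blast
    finally show ?case using chain \<rho>len meas_le_trans prog_meas_len theta_meas_len by blast
  qed
  from this[of 0] show ?thesis by simp
qed simp

theorem even_positional_strategy:
  assumes gp: "gppm V E p VE \<rho>" and vV: "v \<in> V"
  shows "\<exists>\<sigma>E. strategy V E VE \<sigma>E \<and> positional V VE \<sigma>E \<and>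
        (\<forall>\<pi>. play V E \<pi> \<and> \<pi> 0 = v \<and> consistent VE \<sigma>E \<pi> \<longrightarrow> meas_le (theta V p \<pi>) (\<rho> v))"
proof -
  have \<rho>MM: "\<forall>v\<in>V. \<rho> v \<in> MM V p" using gp by (simp add: gppm_def)
  define good where "good u w \<longleftrightarrow> w \<in> post E u \<and> meas_le (prog_meas d (p u) (\<rho> w)) (\<rho> u)" for u w
  define \<sigma>E where "\<sigma>E xs = (SOME w. good (last xs) w)" for xs
  have "\<exists>w. good u w" if "u \<in> VE" for u
  proof -
    obtain w where w: "w \<in> post E u" "meas_le_i (p u) (Prog V p \<rho> u w) (\<rho> u)"
      using gp \<open>u \<in> VE\<close> unfolding gppm_def by blast
    have "u \<in> V" using \<open>u \<in> VE\<close> VE_subset by auto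
    then show ?thesis using gppm_prog_meas_le[OF \<rho>MM \<open>u \<in> V\<close> w] w good_def by blast
  qed
  then have \<sigma>E_good: "good (last xs) (\<sigma>E xs)" if "last xs \<in> VE" for xs
    unfolding \<sigma>E_def using someI_ex that by metis
  have "strategy V E VE \<sigma>E"
    unfolding strategy_def using \<sigma>E_good good_def by blast
  moreover have "positional V VE \<sigma>E"
    unfolding positional_def \<sigma>E_def by simp
  moreover have "meas_le (theta V p \<pi>) (\<rho> v)" if "play V E \<pi>" "\<pi> 0 = v" "consistent VE \<sigma>E \<pi>" for \<pi>
  proof -
    have r: "range \<pi> \<subseteq> V" using play_range that by blast
    have "meas_le (prog_meas d (p (\<pi> n)) (\<rho> (\<pi> (Suc n)))) (\<rho> (\<pi> n))" for n
    proof (cases "\<pi> n \<in> VE")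
      case True
      then have "\<pi> (Suc n) = \<sigma>E (map \<pi> [0..<Suc n])" using that by (simp add: consistent_def)
      then show ?thesis using \<sigma>E_good[of "map \<pi> [0..<Suc n]"] True good_def by simp
    next
      case False
      have inV: "\<pi> n \<in> V" using r by auto
      have w: "\<pi> (Suc n) \<in> post E (\<pi> n)" using play_edge that by blast
      then have "meas_le_i (p (\<pi> n)) (Prog V p \<rho> (\<pi> n) (\<pi> (Suc n))) (\<rho> (\<pi> n))"
        using gp False inV by (auto simp: gppm_def)
      then show ?thesis using gppm_prog_meas_le[OF \<rho>MM inV w] by simp
    qed
    then show ?thesis using theta_le_progress_chain[OF r \<rho>MM] that by simp
  qed
  ultimately show ?thesis by blast
qed

definition odd_forces :: "'v \<Rightarrow> meas \<Rightarrow> bool" where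
  "odd_forces v x \<longleftrightarrow> (\<exists>\<sigma>. strategy V E (V - VE) \<sigma> \<and>
     (\<forall>\<pi>. play V E \<pi> \<and> \<pi> 0 = v \<and> consistent (V - VE) \<sigma> \<pi> \<longrightarrow> meas_le x (theta V p \<pi>)))"

lemma odd_forcesI:
  assumes "strategy V E (V - VE) \<sigma>"
    and "\<And>\<pi>. \<lbrakk>play V E \<pi>; \<pi> 0 = v; consistent (V - VE) \<sigma> \<pi>\<rbrakk> \<Longrightarrow> meas_le x (theta V p \<pi>)"
  shows "odd_forces v x"
  using assms unfolding odd_forces_def by blast

definition some_succ :: "'v \<Rightarrow> 'v" where "some_succ u = (SOME w. (u, w) \<in> E)"

lemma some_succ_in_post: assumes "u \<in> V" shows "some_succ u \<in> post E u"
proof -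
  have "\<exists>w. (u, w) \<in> E" using edge_total assms by blast
  then have "(u, SOME w. (u, w) \<in> E) \<in> E" by (rule someI_ex)
  then show ?thesis unfolding some_succ_def post_def by simp
qed

lemma strategy_some_succ: "strategy V E X (\<lambda>xs. some_succ (last xs))"
  unfolding strategy_def using some_succ_in_post last_in_set by blast

lemma odd_forces_mono:
  assumes "odd_forces v x" "meas_len d y" "meas_len d x" "meas_le y x"
  shows "odd_forces v y"
  using assms meas_le_trans[of d y x] unfolding odd_forces_def by (meson theta_meas_len)

lemma odd_forces_zero: "odd_forces v (Some (replicate d 0))"
  unfolding odd_forces_def using strategy_some_succ zeros_le theta_meas_len by blast

lemma composed_strategy:
  fixes \<Sigma> :: "'v \<Rightarrow> 'v list \<Rightarrow> 'v"
  assumes uV: "u \<in> V" and w0: "w0 \<in> post E u" and strats: "\<And>w. strategy V E (V - VE) (\<Sigma> w)"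
  obtains \<sigma> where "strategy V E (V - VE) \<sigma>"
    and "\<And>\<pi>. \<lbrakk>play V E \<pi>; \<pi> 0 = u; consistent (V - VE) \<sigma> \<pi>\<rbrakk>
      \<Longrightarrow> (u \<notin> VE \<longrightarrow> \<pi> 1 = w0) \<and> consistent (V - VE) (\<Sigma> (\<pi> 1)) (\<lambda>j. \<pi> (Suc j))"
proof -
  define \<sigma> where "\<sigma> xs = (if tl xs = [] then (if hd xs = u \<and> u \<notin> VE then w0 else some_succ (hd xs))
      else \<Sigma> (hd (tl xs)) (tl xs))" for xs
  have "strategy V E (V - VE) \<sigma>"
    unfolding strategy_def
  proof (intro allI impI)
    fix xs assume xs: "xs \<noteq> [] \<and> set xs \<subseteq> V \<and> last xs \<in> V - VE"
    show "\<sigma> xs \<in> post E (last xs)"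
    proof (cases "tl xs = []")
      case True
      then have "xs = [hd xs]" using xs by (cases xs) auto
      then show ?thesis using True w0 some_succ_in_post xs unfolding \<sigma>_def
        by (metis hd_in_set last_ConsL subsetD)
    next
      case False
      have "last (tl xs) = last xs" "set (tl xs) \<subseteq> V"
        using False xs by (auto simp: last_tl dest: list.set_sel(2))
      then show ?thesis using strats[of "hd (tl xs)"] False xs unfolding \<sigma>_def strategy_def by auto
    qed
  qed
  moreover have "(u \<notin> VE \<longrightarrow> \<pi> 1 = w0) \<and> consistent (V - VE) (\<Sigma> (\<pi> 1)) (\<lambda>j. \<pi> (Suc j))"
    if h: "play V E \<pi>" "\<pi> 0 = u" "consistent (V - VE) \<sigma> \<pi>" for \<pi>
  proof -
    have "\<pi> 1 = w0" if "u \<notin> VE"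
    proof -
      have "\<pi> (Suc 0) = \<sigma> (map \<pi> [0..<Suc 0])" using h uV that by (simp add: consistent_def)
      then show ?thesis using h that unfolding \<sigma>_def by simp
    qed
    moreover have "consistent (V - VE) (\<Sigma> (\<pi> 1)) (\<lambda>j. \<pi> (Suc j))"
      unfolding consistent_def
    proof (intro allI impI)
      fix n assume "\<pi> (Suc n) \<in> V - VE"
      then have "\<pi> (Suc (Suc n)) = \<sigma> (map \<pi> [0..<Suc (Suc n)])"
        using h by (simp add: consistent_def)
      then show "\<pi> (Suc (Suc n)) = \<Sigma> (\<pi> 1) (map (\<lambda>j. \<pi> (Suc j)) [0..<Suc n])"
        unfolding \<sigma>_def by (simp del: upt_Suc add: map_upt_shift)
    qed
    ultimately show ?thesis by blast
  qed
  ultimately show ?thesis using that by blast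
qed

lemma odd_forces_step:
  assumes uV: "u \<in> V" and w0: "w0 \<in> post E u" and A: "A = (if u \<in> VE then post E u else {w0})"
    and wx: "meas_len d x"
    and hyp: "\<forall>w\<in>A. \<exists>a. meas_len d a \<and> odd_forces w a \<and> meas_le x (prog_meas d (p u) a)"
  shows "odd_forces u x"
proof -
  define forces_after_u where "forces_after_u w \<sigma> \<longleftrightarrow> strategy V E (V - VE) \<sigma> \<and>
      (\<forall>\<pi>. play V E \<pi> \<and> \<pi> 0 = w \<and> consistent (V - VE) \<sigma> \<pi> \<longrightarrow>
        meas_le x (prog_meas d (p u) (theta V p \<pi>)))" for w \<sigma>
  have "\<exists>\<sigma>. forces_after_u w \<sigma>" if "w \<in> A" for w
  proof -
    obtain a \<sigma> where a: "meas_len d a" "meas_le x (prog_meas d (p u) a)" "strategy V E (V - VE) \<sigma>"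
      "\<forall>\<pi>. play V E \<pi> \<and> \<pi> 0 = w \<and> consistent (V - VE) \<sigma> \<pi> \<longrightarrow> meas_le a (theta V p \<pi>)"
      using hyp \<open>w \<in> A\<close> unfolding odd_forces_def by blast
    have "meas_le x (prog_meas d (p u) (theta V p \<pi>))" if "meas_le a (theta V p \<pi>)" for \<pi>
      using prog_meas_mono[OF a(1) theta_meas_len p_lt_d[OF uV] that] a(2) wx
        meas_le_trans[OF wx prog_meas_len prog_meas_len] by blast
    then show ?thesis using a unfolding forces_after_u_def by blast
  qed
  define \<Sigma> where "\<Sigma> w =
      (if w \<in> A then (SOME \<sigma>. forces_after_u w \<sigma>) else (\<lambda>xs. some_succ (last xs)))" for w
  have \<Sigma>: "forces_after_u w (\<Sigma> w)" if "w \<in> A" for w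
    using someI_ex[OF \<open>w \<in> A \<Longrightarrow> \<exists>\<sigma>. forces_after_u w \<sigma>\<close>] that by (simp add: \<Sigma>_def)
  have strats: "strategy V E (V - VE) (\<Sigma> w)" for w
  proof (cases "w \<in> A")
    case True
    then show ?thesis using \<Sigma> unfolding forces_after_u_def by blast
  qed (simp add: \<Sigma>_def strategy_some_succ)
  obtain \<sigma> where comp: "strategy V E (V - VE) \<sigma>"
    "\<And>\<pi>. \<lbrakk>play V E \<pi>; \<pi> 0 = u; consistent (V - VE) \<sigma> \<pi>\<rbrakk>
      \<Longrightarrow> (u \<notin> VE \<longrightarrow> \<pi> 1 = w0) \<and> consistent (V - VE) (\<Sigma> (\<pi> 1)) (\<lambda>j. \<pi> (Suc j))"
    using composed_strategy[where \<Sigma> = \<Sigma>, OF uV w0 strats] by metis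
  show ?thesis
  proof (rule odd_forcesI[OF comp(1)])
    fix \<pi> assume h: "play V E \<pi>" "\<pi> 0 = u" "consistent (V - VE) \<sigma> \<pi>"
    have "\<pi> 1 \<in> A" using comp(2)[OF h] A play_edge[OF h(1), of 0] h(2) by auto
    then have "forces_after_u (\<pi> 1) (\<Sigma> (\<pi> 1))" by (rule \<Sigma>)
    then have "meas_le x (prog_meas d (p u) (theta V p (\<lambda>j. \<pi> (Suc j))))"
      using comp(2)[OF h] play_Suc[OF h(1)] unfolding forces_after_u_def by simp
    then show "meas_le x (theta V p \<pi>)" using theta_shift[OF play_range[OF h(1)]] h(2) by simp
  qed
qed

text \<open>Odd's improved strategy consults the old one on the history with the loops through
  priority-q vertices of its q-dominated prefix cut out.\<close>

definition closes_loop :: "nat \<Rightarrow> 'v list \<Rightarrow> 'v \<Rightarrow> bool" where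
  "closes_loop q ys y \<longleftrightarrow> p y = q \<and> (\<forall>z\<in>set ys. q \<le> p z) \<and> y \<in> set ys"

definition cut_step :: "nat \<Rightarrow> 'v list \<Rightarrow> 'v \<Rightarrow> 'v list" where
  "cut_step q ys y =
      (if closes_loop q ys y then take (Suc (LEAST i. i < length ys \<and> ys!i = y)) ys else ys @ [y])"

definition cut_history :: "nat \<Rightarrow> 'v list \<Rightarrow> 'v list" where
  "cut_history q xs = foldl (cut_step q) [] xs"

lemma cut_step_cases:
  "(closes_loop q ys y \<and> (\<exists>i<length ys. ys!i = y \<and> cut_step q ys y = take (Suc i) ys)) \<or>
   (\<not> closes_loop q ys y \<and> cut_step q ys y = ys @ [y])"
proof (cases "closes_loop q ys y")
  case True
  then have "\<exists>i. i < length ys \<and> ys!i = y" by (auto simp: closes_loop_def in_set_conv_nth)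
  then have "(LEAST i. i < length ys \<and> ys!i = y) < length ys
      \<and> ys!(LEAST i. i < length ys \<and> ys!i = y) = y"
    by (rule LeastI_ex)
  then show ?thesis using True by (auto simp: cut_step_def)
qed (simp add: cut_step_def)

lemma cut_step_basic: "cut_step q ys y \<noteq> [] \<and> last (cut_step q ys y) = y
    \<and> set (cut_step q ys y) \<subseteq> insert y (set ys)"
  using cut_step_cases[of q ys y]
  by (auto simp: take_Suc_conv_app_nth dest: in_set_takeD)

lemma cut_history_snoc: "cut_history q (xs @ [y]) = cut_step q (cut_history q xs) y"
  by (simp add: cut_history_def)

lemma cut_history_basic: "xs \<noteq> [] \<Longrightarrow> cut_history q xs \<noteq> [] \<and> last (cut_history q xs) = last xs
    \<and> set (cut_history q xs) \<subseteq> set xs"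
proof (induction xs rule: rev_induct)
  case Nil then show ?case by simp
next
  case (snoc y xs)
  show ?case
  proof (cases "xs = []")
    case True
    then show ?thesis using cut_step_basic[of q "[]" y]
      by (simp add: cut_history_snoc, simp add: cut_history_def)
  next
    case False
    then show ?thesis using snoc.IH cut_step_basic[of q "cut_history q xs" y]
      by (auto simp: cut_history_snoc)
  qed
qed

definition loopfree_path :: "nat \<Rightarrow> ('v list \<Rightarrow> 'v) \<Rightarrow> 'v list \<Rightarrow> bool" where
  "loopfree_path q \<sigma> ys \<longleftrightarrow> ys \<noteq> [] \<and> set ys \<subseteq> V
    \<and> (\<forall>j. Suc j < length ys \<longrightarrow> (ys!j, ys!Suc j) \<in> E)
    \<and> (\<forall>j. Suc j < length ys \<longrightarrow> ys!j \<in> V - VE \<longrightarrow> ys!Suc j = \<sigma> (take (Suc j) ys))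
    \<and> (\<forall>j1 j2. j1 < j2 \<longrightarrow> j2 < length ys \<longrightarrow> (\<forall>k\<le>j2. q \<le> p (ys!k)) \<longrightarrow> p (ys!j1) = q \<longrightarrow> p (ys!j2) = q
          \<longrightarrow> ys!j1 \<noteq> ys!j2)"

lemma loopfree_path_take:
  assumes "loopfree_path q \<sigma> ys" "0 < m"
  shows "loopfree_path q \<sigma> (take m ys)"
proof -
  have ne: "take m ys \<noteq> []" using assms by (auto simp: loopfree_path_def)
  have s: "set (take m ys) \<subseteq> V" using assms set_take_subset by (fastforce simp: loopfree_path_def)
  show ?thesis unfolding loopfree_path_def
  proof (intro conjI ne s allI impI)
    fix j assume "Suc j < length (take m ys)"
    then show "(take m ys!j, take m ys!Suc j) \<in> E" using assms by (auto simp: loopfree_path_def)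
  next
    fix j assume j: "Suc j < length (take m ys)" "take m ys!j \<in> V - VE"
    then have jm: "Suc j < m" "Suc j < length ys" by auto
    then have "take m ys!j = ys!j" "take m ys!Suc j = ys!Suc j"
      "take (Suc j) (take m ys) = take (Suc j) ys"
      by (auto simp: min_def)
    then show "take m ys!Suc j = \<sigma> (take (Suc j) (take m ys))"
      using assms j jm unfolding loopfree_path_def by auto
  next
    fix j1 j2 assume h: "j1 < j2" "j2 < length (take m ys)" "\<forall>k\<le>j2. q \<le> p (take m ys!k)"
      "p (take m ys!j1) = q" "p (take m ys!j2) = q"
    then have "\<forall>k\<le>j2. q \<le> p (ys!k)" by auto
    then show "take m ys!j1 \<noteq> take m ys!j2" using h assms unfolding loopfree_path_def by auto
  qed
qed

lemma loopfree_path_snoc: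
  assumes g: "loopfree_path q \<sigma> ys" and nr: "\<not> closes_loop q ys y" and e: "(last ys, y) \<in> E"
    and c: "last ys \<in> V - VE \<longrightarrow> y = \<sigma> ys"
  shows "loopfree_path q \<sigma> (ys @ [y])"
proof -
  have ne: "ys \<noteq> []" using g by (simp add: loopfree_path_def)
  have lastn: "last ys = ys ! (length ys - 1)" using ne by (simp add: last_conv_nth)
  have yV: "y \<in> V" using e edge_in_V by auto
  show ?thesis unfolding loopfree_path_def
  proof (intro conjI allI impI)
    show "ys @ [y] \<noteq> []" by simp
    show "set (ys @ [y]) \<subseteq> V" using g yV by (auto simp: loopfree_path_def)
  next
    fix j assume j: "Suc j < length (ys @ [y])"
    show "((ys @ [y])!j, (ys @ [y])!Suc j) \<in> E"
    proof (cases "Suc j < length ys")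
      case True then show ?thesis using g by (auto simp: loopfree_path_def nth_append)
    next
      case False
      then have "j = length ys - 1" using j by simp
      then show ?thesis using e lastn ne by (auto simp: nth_append)
    qed
  next
    fix j assume j: "Suc j < length (ys @ [y])" "(ys @ [y])!j \<in> V - VE"
    show "(ys @ [y])!Suc j = \<sigma> (take (Suc j) (ys @ [y]))"
    proof (cases "Suc j < length ys")
      case True then show ?thesis using g j by (auto simp: loopfree_path_def nth_append)
    next
      case False
      then have jj: "j = length ys - 1" using j by simp
      then have "Suc j = length ys" using ne by (cases ys) auto
      then show ?thesis using c j jj lastn ne by (auto simp: nth_append)
    qed
  next
    fix j1 j2 assume h: "j1 < j2" "j2 < length (ys @ [y])" "\<forall>k\<le>j2. q \<le> p ((ys @ [y])!k)"
      "p ((ys @ [y])!j1) = q" "p ((ys @ [y])!j2) = q"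
    show "(ys @ [y])!j1 \<noteq> (ys @ [y])!j2"
    proof (cases "j2 < length ys")
      case True
      have "\<forall>k\<le>j2. q \<le> p (ys!k)" using h True by (auto simp: nth_append)
      then show ?thesis using g h True unfolding loopfree_path_def by (auto simp: nth_append)
    next
      case False
      then have j2: "j2 = length ys" using h by simp
      have all: "\<forall>z\<in>set ys. q \<le> p z"
      proof
        fix z assume "z \<in> set ys"
        then obtain k where k: "k < length ys" "ys!k = z" by (auto simp: in_set_conv_nth)
        then show "q \<le> p z" using h(3) j2 by (auto simp: nth_append dest: spec[of _ k])
      qed
      have py: "p y = q" using h j2 by simp
      have "y \<notin> set ys" using nr all py by (auto simp: closes_loop_def)
      moreover have "(ys @ [y])!j1 \<in> set ys" using h j2 by (auto simp: nth_append)
      ultimately show ?thesis using j2 by auto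
    qed
  qed
qed

lemma loopfree_path_cut_step:
  assumes g: "loopfree_path q \<sigma> ys" and e: "(last ys, y) \<in> E" and c: "last ys \<in> V - VE \<longrightarrow> y = \<sigma> ys"
  shows "loopfree_path q \<sigma> (cut_step q ys y)"
  using cut_step_cases[of q ys y] loopfree_path_take[OF g] loopfree_path_snoc[OF g _ e c] by auto

definition cut_prefix :: "nat \<Rightarrow> (nat \<Rightarrow> 'v) \<Rightarrow> nat \<Rightarrow> 'v list" where
  "cut_prefix q \<pi> n = cut_history q (map \<pi> [0..<Suc n])"

lemma cut_prefix_0: "cut_prefix q \<pi> 0 = [\<pi> 0]"
  by (simp add: cut_prefix_def cut_history_def cut_step_def closes_loop_def)

lemma cut_prefix_Suc: "cut_prefix q \<pi> (Suc n) = cut_step q (cut_prefix q \<pi> n) (\<pi> (Suc n))"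
  by (simp add: cut_prefix_def cut_history_def)

lemma not_closes_loop_if_low:
  "(\<exists>z\<in>set ys. p z < q) \<or> p y < q \<Longrightarrow> \<not> closes_loop q ys y"
  unfolding closes_loop_def using not_le by blast

lemma set_butlast_cut_step: "set (butlast (cut_step q ys y)) \<subseteq> set ys"
  using cut_step_cases[of q ys y] by (auto simp: butlast_take dest: in_set_takeD)

lemma cut_prefix_invariant:
  assumes vV: "v \<in> V"
    and h: "play V E \<pi>" "\<pi> 0 = v" "consistent (V - VE) (\<lambda>zs. \<sigma> (cut_history q zs)) \<pi>"
  shows "loopfree_path q \<sigma> (cut_prefix q \<pi> n) \<and> last (cut_prefix q \<pi> n) = \<pi> n
      \<and> hd (cut_prefix q \<pi> n) = v
     \<and> ((\<exists>k\<le>n. p (\<pi> k) < q) \<longrightarrow> (\<exists>z\<in>set (cut_prefix q \<pi> n). p z < q))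
     \<and> set (butlast (cut_prefix q \<pi> n)) \<subseteq> \<pi> ` {..<n}"
proof (induction n)
  case 0
  have "loopfree_path q \<sigma> [v]" using vV by (simp add: loopfree_path_def)
  then show ?case using h(2) by (auto simp: cut_prefix_0)
next
  case (Suc n)
  let ?ys = "cut_prefix q \<pi> n" and ?y = "\<pi> (Suc n)"
  have path: "loopfree_path q \<sigma> ?ys" and last: "last ?ys = \<pi> n" and hd: "hd ?ys = v"
    and low: "(\<exists>k\<le>n. p (\<pi> k) < q) \<longrightarrow> (\<exists>z\<in>set ?ys. p z < q)"
    and old: "set (butlast ?ys) \<subseteq> \<pi> ` {..<n}"
    using Suc.IH by blast+
  have ne: "?ys \<noteq> []" using path by (simp add: loopfree_path_def)
  have "(last ?ys, ?y) \<in> E" using last h(1) by (simp add: play_def)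
  moreover have "?y = \<sigma> ?ys" if "last ?ys \<in> V - VE"
  proof -
    have "\<pi> n \<in> V - VE" using that last by simp
    then show ?thesis using h(3) unfolding consistent_def cut_prefix_def by blast
  qed
  ultimately have "loopfree_path q \<sigma> (cut_prefix q \<pi> (Suc n))"
    using loopfree_path_cut_step[OF path] by (simp add: cut_prefix_Suc)
  moreover have "last (cut_prefix q \<pi> (Suc n)) = \<pi> (Suc n)"
    using cut_step_basic by (simp add: cut_prefix_Suc)
  moreover have "hd (cut_prefix q \<pi> (Suc n)) = v"
    using cut_step_cases[of q ?ys ?y] ne hd by (auto simp: cut_prefix_Suc hd_append)
  moreover have "\<exists>z\<in>set (cut_prefix q \<pi> (Suc n)). p z < q" if "\<exists>k\<le>Suc n. p (\<pi> k) < q"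
  proof -
    have "(\<exists>z\<in>set ?ys. p z < q) \<or> p ?y < q" using that low le_Suc_eq by auto
    then have "cut_prefix q \<pi> (Suc n) = ?ys @ [?y]"
      using not_closes_loop_if_low by (simp add: cut_prefix_Suc cut_step_def)
    then show ?thesis using \<open>(\<exists>z\<in>set ?ys. p z < q) \<or> p ?y < q\<close> by auto
  qed
  moreover have "set (butlast (cut_prefix q \<pi> (Suc n))) \<subseteq> \<pi> ` {..<Suc n}"
  proof -
    have "set ?ys = insert (\<pi> n) (set (butlast ?ys))"
      using ne last by (cases ?ys rule: rev_cases) auto
    then have "set ?ys \<subseteq> \<pi> ` {..<Suc n}" using old by auto
    then show ?thesis using set_butlast_cut_step[of q ?ys ?y] by (simp add: cut_prefix_Suc)
  qed
  ultimately show ?case by blast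
qed

lemma cut_prefix_append:
  assumes "\<forall>n\<ge>t. \<not> closes_loop q (cut_prefix q \<pi> n) (\<pi> (Suc n))"
  shows "cut_prefix q \<pi> (t + m) = cut_prefix q \<pi> t @ map \<pi> [Suc t..<Suc (t + m)]"
proof (induction m)
  case (Suc m)
  have "cut_prefix q \<pi> (t + Suc m) = cut_prefix q \<pi> (t + m) @ [\<pi> (Suc (t + m))]"
    using assms cut_step_cases[of q "cut_prefix q \<pi> (t + m)" "\<pi> (Suc (t + m))"]
    by (auto simp: cut_prefix_Suc)
  then show ?case using Suc by simp
qed simp

lemma play_of_loopfree_prefixes:
  assumes path: "\<And>n. loopfree_path q \<sigma> (map \<pi> [0..<Suc n])"
  shows "play V E \<pi>" "consistent (V - VE) \<sigma> \<pi>" "inj_on \<pi> (stretch_positions p \<pi> q)"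
proof -
  have "\<pi> n \<in> V" "(\<pi> n, \<pi> (Suc n)) \<in> E" for n
    using path[of "Suc n"] unfolding loopfree_path_def by (auto simp del: upt_Suc)
  then show "play V E \<pi>" by (simp add: play_def)
  show "consistent (V - VE) \<sigma> \<pi>"
    unfolding consistent_def
  proof (intro allI impI)
    fix n assume "\<pi> n \<in> V - VE"
    then show "\<pi> (Suc n) = \<sigma> (map \<pi> [0..<Suc n])"
      using path[of "Suc n"] unfolding loopfree_path_def
      by (auto simp: take_map simp del: upt_Suc dest!: spec[of _ n])
  qed
  have "\<pi> j1 \<noteq> \<pi> j2" if "j1 < j2" "j1 \<in> stretch_positions p \<pi> q" "j2 \<in> stretch_positions p \<pi> q"
    for j1 j2
    using path[of j2] that unfolding loopfree_path_def stretch_positions_def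
    by (auto simp del: upt_Suc dest!: spec2[of _ j1 j2])
  then show "inj_on \<pi> (stretch_positions p \<pi> q)"
    by (metis inj_onI linorder_neqE_nat)
qed

lemma unfolded_play_exists:
  assumes vV: "v \<in> V"
    and h: "play V E \<pi>" "\<pi> 0 = v" "consistent (V - VE) (\<lambda>zs. \<sigma> (cut_history q zs)) \<pi>"
    and no_cut: "\<forall>n\<ge>t. \<not> closes_loop q (cut_prefix q \<pi> n) (\<pi> (Suc n))"
  obtains \<pi>t L where "play V E \<pi>t" "\<pi>t 0 = v" "consistent (V - VE) \<sigma> \<pi>t"
    "inj_on \<pi>t (stretch_positions p \<pi>t q)" "\<forall>m. \<pi>t (L + m) = \<pi> (t + m)" "\<pi>t ` {..<L} \<subseteq> \<pi> ` {..<t}"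
proof -
  note inv = cut_prefix_invariant[OF vV h]
  let ?H = "cut_prefix q \<pi> t"
  define L where "L = length ?H - 1"
  have "?H \<noteq> []" using inv[of t] by (simp add: loopfree_path_def)
  then have len: "length ?H = Suc L" and last: "?H ! L = \<pi> t"
    using inv[of t] by (auto simp: L_def last_conv_nth)
  txt \<open>From time t on nothing is cut, so the cut histories of \<pi> only grow and are the prefixes
    of a single play \<pi>t.\<close>
  define \<pi>t where "\<pi>t j = (if j < L then ?H ! j else \<pi> (t + (j - L)))" for j
  have unfold: "cut_prefix q \<pi> (t + m) = map \<pi>t [0..<Suc (L + m)]" for m
  proof (rule nth_equalityI)
    note app = cut_prefix_append[OF no_cut, of m]
    fix j assume "j < length (cut_prefix q \<pi> (t + m))"
    then have j: "j < Suc (L + m)" using app len by (simp del: upt_Suc)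
    show "cut_prefix q \<pi> (t + m) ! j = map \<pi>t [0..<Suc (L + m)] ! j"
    proof (cases "j < Suc L")
      case True
      then show ?thesis using app len last j
        by (auto simp: \<pi>t_def nth_append less_Suc_eq simp del: upt_Suc)
    next
      case False
      then have "Suc t + (j - Suc L) = t + (j - L)" by simp
      then show ?thesis using app len j False by (simp add: \<pi>t_def nth_append del: upt_Suc)
    qed
  qed (use cut_prefix_append[OF no_cut] len in \<open>simp del: upt_Suc\<close>)
  have "loopfree_path q \<sigma> (map \<pi>t [0..<Suc n])" for n
  proof -
    have "map \<pi>t [0..<Suc n] = take (Suc n) (cut_prefix q \<pi> (t + n))"
      by (simp add: unfold take_map del: upt_Suc)
    then show ?thesis using loopfree_path_take inv by simp
  qed
  note play = play_of_loopfree_prefixes[OF this]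
  have "\<pi>t 0 = v" using unfold[of 0] inv[of t] by (simp add: hd_map del: upt_Suc)
  moreover have "\<pi>t ` {..<L} \<subseteq> \<pi> ` {..<t}"
  proof
    fix x assume "x \<in> \<pi>t ` {..<L}"
    then obtain j where "j < L" "x = butlast ?H ! j" using len by (auto simp: \<pi>t_def nth_butlast)
    then have "x \<in> set (butlast ?H)" using len by simp
    then show "x \<in> \<pi> ` {..<t}" using inv[of t] by blast
  qed
  moreover have "\<forall>m. \<pi>t (L + m) = \<pi> (t + m)" by (simp add: \<pi>t_def)
  ultimately show ?thesis using that play by blast
qed

lemma exceeds_below_of_shared_suffix:
  assumes qodd: "odd q" and qd: "q < d" and lx: "length xs = d"
    and big: "card {v \<in> V. p v = q} < xs!q"
    and rt: "range \<pi>t \<subseteq> V" and r: "range \<pi> \<subseteq> V"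
    and le: "meas_le (Some xs) (theta V p \<pi>t)" and inj: "inj_on \<pi>t (stretch_positions p \<pi>t q)"
    and suffix: "\<forall>m. \<pi>t (L + m) = \<pi> (t + m)"
    and pre_t: "\<forall>k<L. q \<le> p (\<pi>t k)" and pre: "\<forall>k<t. q \<le> p (\<pi> k)"
  shows "exceeds_below q xs (theta V p \<pi>)"
proof -
  note same = theta_list_common_suffix[OF rt r suffix pre_t pre]
  show ?thesis
  proof (cases "even_wins p \<pi>t")
    case False
    then show ?thesis using same(1) by (simp add: theta_eq_theta_list exceeds_below_def)
  next
    case True
    have "card (stretch_positions p \<pi>t q) \<le> card {v \<in> V. p v = q}"
      using inj rt finite_V by (intro card_inj_on_le) (auto simp: stretch_positions_def)
    then have "theta_list \<pi>t ! q < xs ! q"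
      using big qodd qd finite_stretch_positions[OF rt True qodd]
      by (simp add: theta_list_nth degree_eq_card)
    moreover have "meas_le (Some xs) (Some (theta_list \<pi>t))"
      using le True by (simp add: theta_eq_theta_list)
    ultimately obtain k where "k < q" "\<forall>j<k. xs!j = theta_list \<pi>t ! j" "xs!k < theta_list \<pi>t ! k"
      using first_diff_below_of_lex_le[of xs "theta_list \<pi>t" q] lx qd by auto
    then show ?thesis using True same qd by (auto simp: theta_eq_theta_list exceeds_below_def)
  qed
qed

lemma odd_forces_improvement_below:
  assumes vV: "v \<in> V" and qodd: "odd q" and qd: "q < d"
    and strat: "strategy V E (V - VE) \<sigma>"
    and guar: "\<forall>\<pi>. play V E \<pi> \<and> \<pi> 0 = v \<and> consistent (V - VE) \<sigma> \<pi> \<longrightarrow> meas_le (Some xs) (theta V p \<pi>)"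
    and lx: "length xs = d" and big: "card {v \<in> V. p v = q} < xs!q"
  shows "\<exists>\<sigma>'. strategy V E (V - VE) \<sigma>' \<and>
    (\<forall>\<pi>. play V E \<pi> \<and> \<pi> 0 = v \<and> consistent (V - VE) \<sigma>' \<pi> \<longrightarrow> exceeds_below q xs (theta V p \<pi>))"
proof -
  let ?\<sigma>' = "\<lambda>zs. \<sigma> (cut_history q zs)"
  have "strategy V E (V - VE) ?\<sigma>'"
    using strat cut_history_basic unfolding strategy_def by (metis subset_trans)
  moreover have "exceeds_below q xs (theta V p \<pi>)"
    if h: "play V E \<pi>" "\<pi> 0 = v" "consistent (V - VE) ?\<sigma>' \<pi>" for \<pi>
  proof -
    have r: "range \<pi> \<subseteq> V" using play_range h by blast
    have from_no_cut: "exceeds_below q xs (theta V p \<pi>)"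
      if no_cut: "\<forall>n\<ge>t. \<not> closes_loop q (cut_prefix q \<pi> n) (\<pi> (Suc n))"
        and pre: "\<forall>k<t. q \<le> p (\<pi> k)" for t
    proof -
      obtain \<pi>t L where t: "play V E \<pi>t" "\<pi>t 0 = v" "consistent (V - VE) \<sigma> \<pi>t"
        "inj_on \<pi>t (stretch_positions p \<pi>t q)" "\<forall>m. \<pi>t (L + m) = \<pi> (t + m)" "\<pi>t ` {..<L} \<subseteq> \<pi> `
            {..<t}"
        using unfolded_play_exists[OF vV h no_cut] by blast
      have "\<forall>k<L. q \<le> p (\<pi>t k)" using t(6) pre by fastforce
      moreover have "meas_le (Some xs) (theta V p \<pi>t)" using guar t(1-3) by blast
      ultimately show ?thesis
        using exceeds_below_of_shared_suffix[OF qodd qd lx big play_range[OF t(1)] r] t(4,5) pre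
        by blast
    qed
    consider (low) "\<exists>k. p (\<pi> k) < q" | (always_q) "\<forall>k. q \<le> p (\<pi> k)" "\<exists>\<^sub>\<infinity> k. p (\<pi> k) = q"
      | (finitely_q) "\<forall>k. q \<le> p (\<pi> k)" "\<not> (\<exists>\<^sub>\<infinity> k. p (\<pi> k) = q)"
      by (meson not_le)
    then show ?thesis
    proof cases
      case low
      define t where "t = (LEAST k. p (\<pi> k) < q)"
      have "p (\<pi> t) < q" using low LeastI_ex t_def by metis
      then have "\<forall>n\<ge>t. \<not> closes_loop q (cut_prefix q \<pi> n) (\<pi> (Suc n))"
        using cut_prefix_invariant[OF vV h] not_closes_loop_if_low by blast
      moreover have "\<forall>k<t. q \<le> p (\<pi> k)" using not_less_Least t_def by (metis not_le)
      ultimately show ?thesis using from_no_cut by blast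
    next
      case always_q
      then have "Min (inf_prios p \<pi>) = q" using Min_inf_prios_eqI[OF r, of 0 q] by simp
      then show ?thesis using qodd
        by (simp add: even_wins_iff_min_inf_prios theta_eq_theta_list exceeds_below_def)
    next
      case finitely_q
      then have "finite {k. p (\<pi> k) = q}" by (simp add: INFM_iff_infinite)
      then obtain t where "{k. p (\<pi> k) = q} \<subseteq> {..<t}" using finite_nat_bounded by blast
      then have "\<forall>n\<ge>t. \<not> closes_loop q (cut_prefix q \<pi> n) (\<pi> (Suc n))"
        by (auto simp: closes_loop_def)
      then show ?thesis using from_no_cut finitely_q by blast
    qed
  qed
  ultimately show ?thesis by blast
qed

definition overflow :: "nat list \<Rightarrow> nat \<Rightarrow> bool" where
  "overflow xs i \<longleftrightarrow> i < d \<and> odd i \<and> card {v \<in> V. p v = i} < xs!i"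

lemma no_overflow_in_MM:
  assumes "length xs = d" "\<forall>i<d. even i \<longrightarrow> xs!i = 0" "\<forall>i. \<not> overflow xs i"
  shows "Some xs \<in> MM V p"
proof -
  have "\<forall>i<d. odd i \<longrightarrow> xs!i \<le> card {v \<in> V. p v = i}"
    using assms(3) unfolding overflow_def by (meson not_less)
  then show ?thesis using assms(1,2) unfolding Some_MM by blast
qed

lemma odd_position_of_theta_gt:
  assumes "theta V p \<pi> = Some ys" "k < d" "xs!k < ys!k"
  shows "odd k"
  using assms by (auto simp: theta_eq_theta_list theta_list_nth split: if_splits)

lemma theta_None_of_exceeds_below_1:
  assumes "exceeds_below 1 xs (theta V p \<pi>)"
  shows "theta V p \<pi> = None"
proof (rule ccontr)
  assume "theta V p \<pi> \<noteq> None"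
  then obtain ys where ys: "theta V p \<pi> = Some ys" by auto
  then have "xs!0 < ys!0" using assms by (auto simp: exceeds_below_def)
  moreover have "0 < d" by (simp add: dim_def)
  ultimately show False using odd_position_of_theta_gt[OF ys] by blast
qed

lemma prog_list_le_theta_of_exceeds_below:
  assumes "exceeds_below q xs (theta V p \<pi>)" "odd q" "q \<noteq> 1" "q < d" "length xs = d"
  shows "meas_le (Some (prog_list d (q - 2) xs)) (theta V p \<pi>)"
proof (cases "theta V p \<pi>")
  case (Some ys)
  then obtain j where j: "j < q" "\<forall>i<j. xs!i = ys!i" "xs!j < ys!j"
    using assms(1) by (auto simp: exceeds_below_def)
  have "odd j" using odd_position_of_theta_gt[OF Some] j assms(4) by simp
  then have "j \<le> q - 2" using j(1) assms(2,3) by presburger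
  then show ?thesis
    using prog_list_le_of_first_diff[OF assms(5) _ _ _ j(2,3)] Some theta_meas_len[of \<pi>] assms(4)
    by simp
qed simp

lemma odd_forces_bounded_aux:
  assumes vV: "v \<in> V"
  shows "\<lbrakk>length xs = d; \<forall>i<d. even i \<longrightarrow> xs!i = 0; \<forall>i. overflow xs i \<longrightarrow> i < k; odd_forces v (Some xs)\<rbrakk>
    \<Longrightarrow> \<exists>c\<in>MM V p. meas_le (Some xs) c \<and> odd_forces v c"
proof (induction k arbitrary: xs)
  case 0
  then have "Some xs \<in> MM V p" using no_overflow_in_MM by auto
  then show ?case using "0.prems"(4) by (intro bexI[of _ "Some xs"]) auto
next
  case (Suc k)
  show ?case
  proof (cases "\<exists>i. overflow xs i")
    case False
    then have "Some xs \<in> MM V p" using no_overflow_in_MM Suc.prems by blast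
    then show ?thesis using Suc.prems(4) by (intro bexI[of _ "Some xs"]) auto
  next
    case True
    define q where "q = (LEAST i. overflow xs i)"
    have "overflow xs q" using True LeastI_ex q_def by metis
    then have qodd: "odd q" and qd: "q < d" and big: "card {v \<in> V. p v = q} < xs!q" and qk: "q \<le> k"
      using Suc.prems(3) by (auto simp: overflow_def)
    obtain \<sigma> where "strategy V E (V - VE) \<sigma>"
      "\<forall>\<pi>. play V E \<pi> \<and> \<pi> 0 = v \<and> consistent (V - VE) \<sigma> \<pi> \<longrightarrow> meas_le (Some xs) (theta V p \<pi>)"
      using Suc.prems(4) unfolding odd_forces_def by blast
    then obtain \<sigma>' where \<sigma>': "strategy V E (V - VE) \<sigma>'"
      "\<And>\<pi>. \<lbrakk>play V E \<pi>; \<pi> 0 = v; consistent (V - VE) \<sigma>' \<pi>\<rbrakk> \<Longrightarrow> exceeds_below q xs (theta V p \<pi>)"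
      using odd_forces_improvement_below[OF vV qodd qd] Suc.prems(1) big by blast
    show ?thesis
    proof (cases "q = 1")
      case True
      have "odd_forces v None"
      proof (rule odd_forcesI[OF \<sigma>'(1)])
        fix \<pi> assume "play V E \<pi>" "\<pi> 0 = v" "consistent (V - VE) \<sigma>' \<pi>"
        then have "exceeds_below 1 xs (theta V p \<pi>)" using \<sigma>'(2) True by blast
        then have "theta V p \<pi> = None" by (rule theta_None_of_exceeds_below_1)
        then show "meas_le None (theta V p \<pi>)" by simp
      qed
      then show ?thesis by (intro bexI[of _ None]) auto
    next
      case False
      then have "3 \<le> q" using qodd by presburger
      let ?xs' = "prog_list d (q - 2) xs"
      have "odd_forces v (Some ?xs')"
        using odd_forcesI[OF \<sigma>'(1)] \<sigma>'(2) prog_list_le_theta_of_exceeds_below qodd False qd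
          Suc.prems(1)
        by blast
      moreover have "\<forall>i<d. even i \<longrightarrow> ?xs'!i = 0" using Suc.prems(2) qodd by (simp add: prog_list_nth)
      moreover have "\<forall>i. overflow ?xs' i \<longrightarrow> i < k"
        using qk qodd False by (auto simp: overflow_def prog_list_nth split: if_splits)
      ultimately obtain c where c: "c \<in> MM V p" "meas_le (Some ?xs') c" "odd_forces v c"
        using Suc.IH[of ?xs'] by auto
      have "q - 2 < d" "\<forall>j<q - 2. xs!j = ?xs'!j" "xs!(q - 2) < ?xs'!(q - 2)"
        using qodd \<open>3 \<le> q\<close> qd by (simp_all add: prog_list_nth)
      then have "lex_lt xs ?xs'" using lex_lt_nth[of xs d ?xs'] Suc.prems(1) by auto
      then have "meas_le (Some xs) c"
        using meas_le_trans[of d "Some xs" "Some ?xs'" c] c MM_meas_len Suc.prems(1) by simp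
      then show ?thesis using c by blast
    qed
  qed
qed

lemma odd_forces_bounded:
  assumes "v \<in> V" "odd_forces v x" "x = prog_meas d q a" "a \<in> MM V p" "q < d"
  shows "\<exists>c\<in>MM V p. meas_le x c \<and> odd_forces v c"
proof (cases a)
  case None
  then show ?thesis using assms by (intro bexI[of _ None]) auto
next
  case (Some xs0)
  have l0: "length xs0 = d" and ez0: "\<forall>i<d. even i \<longrightarrow> xs0!i = 0"
    using assms Some by (auto simp: Some_MM)
  have ez: "\<forall>i<d. even i \<longrightarrow> prog_list d q xs0 ! i = 0" using ez0 assms by (auto simp: prog_list_nth)
  have ov: "\<forall>i. overflow (prog_list d q xs0) i \<longrightarrow> i < d" by (simp add: overflow_def)
  show ?thesis using odd_forces_bounded_aux[OF assms(1), where k = d] ez ov assms Some by auto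
qed

definition odd_value :: "'v \<Rightarrow> meas" where
  "odd_value v =
      (SOME c. c \<in> MM V p \<and> odd_forces v c \<and> (\<forall>c'\<in>MM V p. odd_forces v c' \<longrightarrow> meas_le c' c))"

lemma odd_value_spec:
  assumes "v \<in> V"
  shows "odd_value v \<in> MM V p \<and> odd_forces v (odd_value v)
      \<and> (\<forall>c'\<in>MM V p. odd_forces v c' \<longrightarrow> meas_le c' (odd_value v))"
proof -
  let ?S = "{c \<in> MM V p. odd_forces v c}"
  have "\<exists>m\<in>?S. \<forall>x\<in>?S. (\<lambda>a b. meas_le b a) m x"
  proof (rule finite_total_has_least)
    show "finite ?S" using finite_MM by auto
    show "?S \<noteq> {}" using zeros_in_MM odd_forces_zero by blast
    show "\<forall>a\<in>?S. \<forall>b\<in>?S. meas_le b a \<or> meas_le a b" using meas_le_total MM_meas_len by blast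
    show "\<forall>a\<in>?S. \<forall>b\<in>?S. \<forall>c\<in>?S. meas_le b a \<longrightarrow> meas_le c b \<longrightarrow> meas_le c a"
      using meas_le_trans MM_meas_len by blast
  qed
  then have "\<exists>c. c \<in> MM V p \<and> odd_forces v c \<and> (\<forall>c'\<in>MM V p. odd_forces v c' \<longrightarrow> meas_le c' c)" by auto
  then show ?thesis unfolding odd_value_def by (rule someI_ex)
qed

lemma odd_value_progress:
  assumes uV: "u \<in> V" and w0: "w0 \<in> post E u" and A: "A = (if u \<in> VE then post E u else {w0})"
    and min: "\<forall>w\<in>A. meas_le (prog_meas d (p u) (odd_value w0)) (prog_meas d (p u) (odd_value w))"
  shows "meas_le_i (p u) (Prog V p odd_value u w0) (odd_value u)"
proof -
  have w0V: "w0 \<in> V" using w0 post_subset by auto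
  have AV: "A \<subseteq> V" using A post_subset w0V by auto
  let ?x = "prog_meas d (p u) (odd_value w0)"
  have "odd_forces u ?x"
  proof (rule odd_forces_step[OF uV w0 A])
    show "meas_len d ?x" by simp
    show "\<forall>w\<in>A. \<exists>a. meas_len d a \<and> odd_forces w a \<and> meas_le ?x (prog_meas d (p u) a)"
      using odd_value_spec AV min MM_meas_len by blast
  qed
  then have "\<exists>c\<in>MM V p. meas_le ?x c \<and> odd_forces u c"
    by (rule odd_forces_bounded[OF uV _ refl]) (use odd_value_spec[OF w0V] p_lt_d[OF uV] in auto)
  then obtain c where c: "c \<in> MM V p" "meas_le ?x c" "odd_forces u c" by blast
  have "meas_le c (odd_value u)" using odd_value_spec[OF uV] c by blast
  then show ?thesis
    using Prog_le_i_of_prog_meas_le[of odd_value w0 u c "odd_value u"] odd_value_spec w0V uV c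
    by blast
qed

lemma gppm_odd_value: "gppm V E p VE odd_value"
  unfolding gppm_def
proof (intro conjI ballI)
  fix v assume "v \<in> V" then show "odd_value v \<in> MM V p" using odd_value_spec by blast
next
  fix v assume vE: "v \<in> VE"
  then have vV: "v \<in> V" using VE_subset by auto
  let ?R = "\<lambda>w w'. meas_le (prog_meas d (p v) (odd_value w)) (prog_meas d (p v) (odd_value w'))"
  have "\<exists>w0\<in>post E v. \<forall>w\<in>post E v. ?R w0 w"
  proof (rule finite_total_has_least)
    show "finite (post E v)" using finite_post .
    show "post E v \<noteq> {}" using post_nonempty vV .
    show "\<forall>a\<in>post E v. \<forall>b\<in>post E v. ?R a b \<or> ?R b a" using meas_le_total prog_meas_len by blast
    show "\<forall>a\<in>post E v. \<forall>b\<in>post E v. \<forall>c\<in>post E v. ?R a b \<longrightarrow> ?R b c \<longrightarrow> ?R a c"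
      using meas_le_trans prog_meas_len by blast
  qed
  then obtain w0 where w0: "w0 \<in> post E v" "\<forall>w\<in>post E v. ?R w0 w" by blast
  have "meas_le_i (p v) (Prog V p odd_value v w0) (odd_value v)"
    by (rule odd_value_progress[OF vV w0(1) refl]) (use w0 vE in simp)
  then show "\<exists>w\<in>post E v. meas_le_i (p v) (Prog V p odd_value v w) (odd_value v)" using w0 by blast
next
  fix v w assume v: "v \<in> V - VE" and w: "w \<in> post E v"
  show "meas_le_i (p v) (Prog V p odd_value v w) (odd_value v)"
    by (rule odd_value_progress[OF _ w refl]) (use v in auto)
qed

theorem odd_strategy_least_gppm:
  assumes lg: "least_gppm V E p VE \<rho>" and vV: "v \<in> V"
  shows "\<exists>\<sigma>O. strategy V E (V - VE) \<sigma>O \<and>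
        (\<forall>\<pi>. play V E \<pi> \<and> \<pi> 0 = v \<and> consistent (V - VE) \<sigma>O \<pi> \<longrightarrow> meas_le (\<rho> v) (theta V p \<pi>))"
proof -
  have le: "meas_le (\<rho> v) (odd_value v)"
    using lg gppm_odd_value vV unfolding least_gppm_def by blast
  have rMM: "\<rho> v \<in> MM V p" using lg vV unfolding least_gppm_def gppm_def by blast
  have "odd_forces v (\<rho> v)"
    using odd_forces_mono[of v "odd_value v" "\<rho> v"] odd_value_spec[OF vV] le rMM MM_meas_len
    by blast
  then show ?thesis unfolding odd_forces_def .
qed

end

theorem theorem3:
  fixes V :: "'v set" and E :: "('v \<times> 'v) set" and p :: "'v \<Rightarrow> nat" and VE :: "'v set"
    and \<rho> :: "'v \<Rightarrow> meas"
  assumes "parity_game V E p VE"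
    and "least_gppm V E p VE \<rho>"
  shows "\<forall>v\<in>V.
     (\<exists>\<sigma>O. strategy V E (V - VE) \<sigma>O \<and>
        (\<forall>\<pi>. play V E \<pi> \<and> \<pi> 0 = v \<and> consistent (V - VE) \<sigma>O \<pi> \<longrightarrow> meas_le (\<rho> v) (theta V p \<pi>)))
   \<and> (\<exists>\<sigma>E. strategy V E VE \<sigma>E \<and> positional V VE \<sigma>E \<and>
        (\<forall>\<pi>. play V E \<pi> \<and> \<pi> 0 = v \<and> consistent VE \<sigma>E \<pi> \<longrightarrow> meas_le (theta V p \<pi>) (\<rho> v)))"
proof -
  interpret pgame V E p VE using assms(1) by unfold_locales
  have "gppm V E p VE \<rho>" using assms(2) by (simp add: least_gppm_def)
  then show ?thesis using odd_strategy_least_gppm[OF assms(2)] even_positional_strategy by blast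
qed

end
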